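(* Let $U\subset\mathbb{R}^2$ be open, let $x:U\to\mathbb{R}^3$ and $\xi:U\to S^2$ be analytic, with $\xi$ a proper frontal such that the line congruence $\{x,\xi\}$ is normal, and let $\Omega$ be a tangent moving basis of $\xi$ with $D\xi=\Omega\Delta_\Omega^T$. Then every analytic solution $\gamma:I\to U$ of the equation of principal surfaces $$\gamma'^T\Delta_\Omega\,\mathbf{P}\,\mathrm{adj}(\boldsymbol{\mathcal{II}}_\Omega)^T\Delta_\Omega\boldsymbol{\mathcal{I}}_\Omega\Delta_\Omega^T\gamma'=0$$ is either a branch of the singular set $\Sigma(\xi)$ (i.e. $\gamma(I)\subset\Sigma(\xi)$) or an analytic solution of the equation of developable surfaces $$\gamma'^T\mathbf{P}\,\mathrm{adj}(\boldsymbol{\mathcal{II}}_\Omega)\boldsymbol{\mathcal{I}}_\Omega\Delta_\Omega^T\gamma'=0.$$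
   Context: A frontal is a smooth map $f:U\to\mathbb{R}^3$ admitting locally a smooth unit vector field orthogonal to $f_{u_1},f_{u_2}$; proper means its singular set $\Sigma(f)=\{u: f\text{ not immersive at }u\}$ has empty interior. A tangent moving basis of $\xi$ is a smooth $\Omega=(w_1\ w_2):U\to M_{3\times2}(\mathbb{R})$ with linearly independent columns whose span contains $\xi_{u_1},\xi_{u_2}$; then $D\xi=\Omega\Delta_\Omega^T$ for a unique $\Delta_\Omega$, and $\Sigma(\xi)=(\det\Delta_\Omega)^{-1}(0)$. $\boldsymbol{\mathcal{I}}_\Omega=\Omega^T\Omega$, $\boldsymbol{\mathcal{II}}_\Omega=-\Omega^TDx$, $\mathrm{adj}$ is the adjugate, $\mathbf{P}=\begin{pmatrix}0&1\\-1&0\end{pmatrix}$, and the equations are evaluated at $\gamma(t)$ for all $t\in I$. The congruence $\{x,\xi\}$ is normal if there is a surface $S'$ whose normal lines are parallel to the lines through $x(u)$ in direction $\xi(u)$. *)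

theory Defs
  imports "HOL-Analysis.Analysis"
begin

type_synonym R2 = "real^2"
type_synonym R3 = "real^3"

fun Ck_on :: "nat \<Rightarrow> R2 set \<Rightarrow> (R2 \<Rightarrow> 'a::real_normed_vector) \<Rightarrow> bool" where
  "Ck_on 0 U f = continuous_on U f"
| "Ck_on (Suc k) U f = ((\<forall>u\<in>U. f differentiable (at u)) \<and>
       (\<forall>v. Ck_on k U (\<lambda>u. frechet_derivative f (at u) v)))"

definition smooth_on :: "R2 set \<Rightarrow> (R2 \<Rightarrow> 'a::real_normed_vector) \<Rightarrow> bool" where
  "smooth_on U f \<longleftrightarrow> (\<forall>k. Ck_on k U f)"

definition analytic2_on :: "R2 set \<Rightarrow> (R2 \<Rightarrow> 'a::real_normed_vector) \<Rightarrow> bool" where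
  "analytic2_on U f \<longleftrightarrow> (\<forall>a\<in>U. \<exists>r>0. ball a r \<subseteq> U \<and> (\<exists>c :: nat \<times> nat \<Rightarrow> 'a.
      \<forall>h. norm h < r \<longrightarrow>
        ((\<lambda>(i,j). ((h$1)^i * (h$2)^j) *\<^sub>R c (i,j)) has_sum f (a + h)) UNIV))"

definition analytic1_on :: "real set \<Rightarrow> (real \<Rightarrow> 'a::real_normed_vector) \<Rightarrow> bool" where
  "analytic1_on I f \<longleftrightarrow> (\<forall>a\<in>I. \<exists>r>0. ball a r \<subseteq> I \<and> (\<exists>c :: nat \<Rightarrow> 'a.
      \<forall>h. \<bar>h\<bar> < r \<longrightarrow> ((\<lambda>n. (h^n) *\<^sub>R c n) has_sum f (a + h)) UNIV))"

definition singular_set :: "R2 set \<Rightarrow> (R2 \<Rightarrow> R3) \<Rightarrow> R2 set" where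
  "singular_set U f = {u\<in>U. \<not> inj (frechet_derivative f (at u))}"

definition frontal :: "R2 set \<Rightarrow> (R2 \<Rightarrow> R3) \<Rightarrow> bool" where
  "frontal U f \<longleftrightarrow> smooth_on U f \<and> (\<forall>u\<in>U. \<exists>V. open V \<and> u \<in> V \<and> V \<subseteq> U \<and>
     (\<exists>\<nu> :: R2 \<Rightarrow> R3. smooth_on V \<nu> \<and> (\<forall>v\<in>V. norm (\<nu> v) = 1 \<and>
        (\<forall>j. \<nu> v \<bullet> column j (jacobian f (at v)) = 0))))"

definition proper_frontal :: "R2 set \<Rightarrow> (R2 \<Rightarrow> R3) \<Rightarrow> bool" where
  "proper_frontal U f \<longleftrightarrow> frontal U f \<and> interior (singular_set U f) = {}"

definition tangent_moving_basis :: "R2 set \<Rightarrow> (R2 \<Rightarrow> R3) \<Rightarrow> (R2 \<Rightarrow> real^2^3) \<Rightarrow> bool" where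
  "tangent_moving_basis U \<xi> \<Omega> \<longleftrightarrow> smooth_on U \<Omega> \<and>
     (\<forall>u\<in>U. (\<forall>a b. a *\<^sub>R column 1 (\<Omega> u) + b *\<^sub>R column 2 (\<Omega> u) = 0 \<longrightarrow> a = 0 \<and> b = 0)
        \<and> (\<forall>j. column j (jacobian \<xi> (at u)) \<in> span (columns (\<Omega> u))))"

definition Delta :: "(R2 \<Rightarrow> R3) \<Rightarrow> (R2 \<Rightarrow> real^2^3) \<Rightarrow> R2 \<Rightarrow> real^2^2" where
  "Delta \<xi> \<Omega> u = (THE D. jacobian \<xi> (at u) = \<Omega> u ** transpose D)"

definition first_ff :: "(R2 \<Rightarrow> real^2^3) \<Rightarrow> R2 \<Rightarrow> real^2^2" where
  "first_ff \<Omega> u = transpose (\<Omega> u) ** \<Omega> u"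

definition second_ff :: "(R2 \<Rightarrow> R3) \<Rightarrow> (R2 \<Rightarrow> real^2^3) \<Rightarrow> R2 \<Rightarrow> real^2^2" where
  "second_ff x \<Omega> u = - (transpose (\<Omega> u) ** jacobian x (at u))"

definition adj2 :: "real^2^2 \<Rightarrow> real^2^2" where
  "adj2 A = (\<chi> i j. if i = 1 \<and> j = 1 then A$2$2 else if i = 1 \<and> j = 2 then - A$1$2
                    else if i = 2 \<and> j = 1 then - A$2$1 else A$1$1)"

definition Pmat :: "real^2^2" where
  "Pmat = (\<chi> i j. if i = 1 \<and> j = 2 then 1 else if i = 2 \<and> j = 1 then -1 else 0)"

definition normal_congruence :: "R2 set \<Rightarrow> (R2 \<Rightarrow> R3) \<Rightarrow> (R2 \<Rightarrow> R3) \<Rightarrow> bool" where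
  "normal_congruence U x \<xi> \<longleftrightarrow> (\<exists>lam :: R2 \<Rightarrow> real. smooth_on U lam \<and>
     (\<forall>u\<in>U. \<forall>j. \<xi> u \<bullet> column j (jacobian (\<lambda>v. x v + lam v *\<^sub>R \<xi> v) (at u)) = 0))"

end

theory Submission
  imports Defs "HOL-Complex_Analysis.Complex_Analysis"
begin

text \<open>
  Normality of the congruence gives a function \<open>lam\<close> with \<open>\<xi> \<bullet> x\<^sub>j = - lam\<^sub>j\<close>; differentiating
  once more and using \<open>\<xi> \<bullet> \<xi>\<^sub>i = 0\<close> shows that \<open>\<xi>\<^sub>i \<bullet> x\<^sub>j\<close> is symmetric in \<open>i, j\<close>, i.e. that
  \<open>\<Delta> II\<close> is a symmetric matrix. For such \<open>\<Delta>\<close> the \<open>2\<times>2\<close> identity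
  \<open>\<Delta> P adj(II)\<^sup>T \<Delta> = det \<Delta> \<cdot> P adj(II)\<close> shows that the form of the equation of principal surfaces
  is \<open>det \<Delta>\<close> times the form of the equation of developable surfaces.

  Along the analytic curve \<open>\<gamma>\<close> the Gram determinant \<open>K\<close> of \<open>D\<xi>\<close> is real analytic: complexifying the
  power series of \<open>\<xi>\<^sub>u\<^sub>1, \<xi>\<^sub>u\<^sub>2\<close> and of \<open>\<gamma>\<close> extends it holomorphically. \<open>K\<close> vanishes
  exactly on \<open>\<Sigma>(\<xi>)\<close>, and so does \<open>det \<Delta>\<close>. By the identity theorem either \<open>K \<equiv> 0\<close>, so that
  \<open>\<gamma>\<close> runs in \<open>\<Sigma>(\<xi>)\<close>, or the zeros of \<open>K\<close> have empty interior; then the developable form,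
  which is continuous and vanishes wherever \<open>K \<noteq> 0\<close>, vanishes everywhere.
\<close>

definition square_indices :: "nat \<Rightarrow> (nat \<times> nat) set" where
  "square_indices N = {..<N} \<times> {..<N}"

lemma finite_square_indices [simp]: "finite (square_indices N)"
  by (simp add: square_indices_def)

lemma filterlim_square_indices: "filterlim square_indices (finite_subsets_at_top UNIV) sequentially"
  unfolding filterlim_finite_subsets_at_top
proof (safe, goal_cases)
  case (1 X)
  obtain a where "fst ` X \<subseteq> {..<a}"
    using 1 by (meson finite_imageI finite_nat_set_iff_bounded lessThan_iff subsetI)
  moreover obtain b where "snd ` X \<subseteq> {..<b}"
    using 1 by (meson finite_imageI finite_nat_set_iff_bounded lessThan_iff subsetI)
  ultimately have n: "X \<subseteq> {..<a+b} \<times> {..<a+b}" by force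
  show ?case using eventually_ge_at_top[of "a+b"]
    by eventually_elim (use n in \<open>auto simp: square_indices_def\<close>)
qed

lemma has_sum_imp_square_partial_sums:
  "(f has_sum s) UNIV \<Longrightarrow> (\<lambda>N. sum f (square_indices N)) \<longlonglongrightarrow> s"
  unfolding has_sum_def by (rule filterlim_compose[OF _ filterlim_square_indices])

lemma infsum_Compl_square_indices:
  fixes f :: "nat \<times> nat \<Rightarrow> 'a::banach"
  assumes "f summable_on UNIV"
  shows "infsum f (- square_indices N) = infsum f UNIV - sum f (square_indices N)"
proof -
  have "infsum f (square_indices N \<union> - square_indices N) =
      infsum f (square_indices N) + infsum f (- square_indices N)"
    by (rule infsum_Un_disjoint) (auto intro: summable_on_subset_banach[OF assms])
  then show ?thesis by simp
qed

lemma infsum_Compl_square_indices_tendsto_0: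
  fixes f :: "nat \<times> nat \<Rightarrow> 'a::banach"
  assumes "f summable_on UNIV"
  shows "(\<lambda>N. infsum f (- square_indices N)) \<longlonglongrightarrow> 0"
proof -
  have "(\<lambda>N. infsum f UNIV - sum f (square_indices N)) \<longlonglongrightarrow> infsum f UNIV - infsum f UNIV"
    by (intro tendsto_diff tendsto_const has_sum_imp_square_partial_sums) (use assms in simp)
  then show ?thesis by (simp add: infsum_Compl_square_indices[OF assms])
qed

lemma dominated_square_partial_sum_error:
  fixes f :: "nat \<times> nat \<Rightarrow> 'a::banach"
  assumes bound: "\<And>k. norm (f k) \<le> M k" and M: "M summable_on UNIV"
  shows "norm (sum f (square_indices N) - infsum f UNIV) \<le> infsum M (- square_indices N)"
proof -
  have abs: "(\<lambda>k. norm (f k)) summable_on A" for A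
    by (rule summable_on_comparison_test[OF summable_on_subset[OF M subset_UNIV] bound]) simp
  have "norm (sum f (square_indices N) - infsum f UNIV) = norm (infsum f (- square_indices N))"
    by (simp add: infsum_Compl_square_indices[OF abs_summable_summable[OF abs]] norm_minus_commute)
  also have "\<dots> \<le> infsum (\<lambda>k. norm (f k)) (- square_indices N)"
    by (rule norm_infsum_bound[OF abs])
  also have "\<dots> \<le> infsum M (- square_indices N)"
    by (rule infsum_mono[OF abs summable_on_subset[OF M subset_UNIV] bound])
  finally show ?thesis .
qed

lemma uniform_limit_square_partial_sums:
  fixes f :: "nat \<times> nat \<Rightarrow> 'b \<Rightarrow> 'a::banach"
  assumes bound: "\<And>k x. x \<in> S \<Longrightarrow> norm (f k x) \<le> M k" and M: "M summable_on UNIV"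
  shows "uniform_limit S (\<lambda>N x. sum (\<lambda>k. f k x) (square_indices N))
           (\<lambda>x. infsum (\<lambda>k. f k x) UNIV) sequentially"
  unfolding uniform_limit_iff
proof (intro allI impI)
  fix e :: real assume "e > 0"
  with infsum_Compl_square_indices_tendsto_0[OF M]
  have "\<forall>\<^sub>F N in sequentially. infsum M (- square_indices N) < e"
    by (auto dest: order_tendstoD(2))
  then show "\<forall>\<^sub>F N in sequentially. \<forall>x\<in>S.
      dist (sum (\<lambda>k. f k x) (square_indices N)) (infsum (\<lambda>k. f k x) UNIV) < e"
    by eventually_elim
      (auto simp: dist_norm intro: le_less_trans[OF dominated_square_partial_sum_error] bound M)
qed

lemma eventually_dominated_square_partial_sums_close:
  fixes f' :: "nat \<times> nat \<Rightarrow> 'a \<Rightarrow> 'b::real_normed_vector \<Rightarrow> 'c::banach"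
  assumes bound: "\<And>k y v. y \<in> S \<Longrightarrow> norm (f' k y v) \<le> M k * norm v"
    and M: "M summable_on UNIV" and "e > 0"
  shows "\<forall>\<^sub>F N in sequentially. \<forall>y\<in>S. \<forall>v.
           norm (sum (\<lambda>k. f' k y v) (square_indices N) - infsum (\<lambda>k. f' k y v) UNIV) \<le> e * norm v"
proof -
  have "\<forall>\<^sub>F N in sequentially. infsum M (- square_indices N) < e"
    using order_tendstoD(2)[OF infsum_Compl_square_indices_tendsto_0[OF M] \<open>e > 0\<close>] .
  then show ?thesis
  proof eventually_elim
    case (elim N)
    show ?case
    proof (intro ballI allI)
      fix y v assume "y \<in> S"
      have "norm (sum (\<lambda>k. f' k y v) (square_indices N) - infsum (\<lambda>k. f' k y v) UNIV)
          \<le> infsum (\<lambda>k. M k * norm v) (- square_indices N)"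
        by (rule dominated_square_partial_sum_error[OF bound[OF \<open>y \<in> S\<close>] summable_on_cmult_left[OF M]])
      also have "\<dots> = infsum M (- square_indices N) * norm v"
        by (rule infsum_cmult_left')
      also have "\<dots> \<le> e * norm v"
        using elim by (intro mult_right_mono) auto
      finally show "norm (sum (\<lambda>k. f' k y v) (square_indices N) - infsum (\<lambda>k. f' k y v) UNIV) \<le> e * norm v" .
    qed
  qed
qed

lemma has_derivative_infsum:
  fixes f :: "nat \<times> nat \<Rightarrow> 'a::real_normed_vector \<Rightarrow> 'b::banach"
    and f' :: "nat \<times> nat \<Rightarrow> 'a \<Rightarrow> 'a \<Rightarrow> 'b"
  assumes S: "convex S"
    and df: "\<And>k x. x \<in> S \<Longrightarrow> (f k has_derivative f' k x) (at x within S)"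
    and bound: "\<And>k x v. x \<in> S \<Longrightarrow> norm (f' k x v) \<le> M k * norm v"
    and M: "M summable_on UNIV"
    and fs: "\<And>x. x \<in> S \<Longrightarrow> (\<lambda>k. f k x) summable_on UNIV"
    and x: "x \<in> S"
  shows "((\<lambda>x. infsum (\<lambda>k. f k x) UNIV) has_derivative (\<lambda>v. infsum (\<lambda>k. f' k x v) UNIV))
           (at x within S)"
proof -
  have "\<exists>g. \<forall>y\<in>S. (\<lambda>N. sum (\<lambda>k. f k y) (square_indices N)) \<longlonglongrightarrow> g y \<and>
           (g has_derivative (\<lambda>v. infsum (\<lambda>k. f' k y v) UNIV)) (at y within S)"
  proof (rule has_derivative_sequence[OF S _ _ x])
    show "((\<lambda>y. sum (\<lambda>k. f k y) (square_indices N)) has_derivative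
        (\<lambda>v. sum (\<lambda>k. f' k y v) (square_indices N))) (at y within S)" if "y \<in> S" for N y
      by (rule has_derivative_sum) (rule df[OF that])
    show "\<forall>\<^sub>F N in sequentially. \<forall>y\<in>S. \<forall>v.
        norm (sum (\<lambda>k. f' k y v) (square_indices N) - infsum (\<lambda>k. f' k y v) UNIV) \<le> e * norm v"
      if "e > 0" for e
      by (rule eventually_dominated_square_partial_sums_close[OF bound M that])
    show "(\<lambda>N. sum (\<lambda>k. f k x) (square_indices N)) \<longlonglongrightarrow> infsum (\<lambda>k. f k x) UNIV"
      by (rule has_sum_imp_square_partial_sums) (rule has_sum_infsum[OF fs[OF x]])
  qed
  then obtain g where g: "\<And>y. y \<in> S \<Longrightarrow> (\<lambda>N. sum (\<lambda>k. f k y) (square_indices N)) \<longlonglongrightarrow> g y"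
    and g': "(g has_derivative (\<lambda>v. infsum (\<lambda>k. f' k x v) UNIV)) (at x within S)"
    using x by blast
  have "infsum (\<lambda>k. f k y) UNIV = g y" if "y \<in> S" for y
    using LIMSEQ_unique[OF _ g[OF that]] has_sum_imp_square_partial_sums[OF has_sum_infsum[OF fs[OF that]]]
    by blast
  then show ?thesis
    by (rule has_derivative_transform[OF x _ g'])
qed

section \<open>Double power series\<close>

definition dps_eval :: "(nat \<times> nat \<Rightarrow> 'a::real_normed_vector) \<Rightarrow> real^2 \<Rightarrow> 'a" where
  "dps_eval c h = infsum (\<lambda>(i,j). ((h$1)^i * (h$2)^j) *\<^sub>R c (i,j)) UNIV"

definition dps_abs_conv :: "(nat \<times> nat \<Rightarrow> 'a::real_normed_vector) \<Rightarrow> real \<Rightarrow> bool" where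
  "dps_abs_conv c r \<longleftrightarrow> (\<forall>p q. 0 \<le> p \<longrightarrow> 0 \<le> q \<longrightarrow> p^2 + q^2 < r^2 \<longrightarrow>
      (\<lambda>(i,j). p^i * q^j * norm (c (i,j))) summable_on UNIV)"

definition dps_deriv1 :: "(nat \<times> nat \<Rightarrow> 'a::real_normed_vector) \<Rightarrow> nat \<times> nat \<Rightarrow> 'a" where
  "dps_deriv1 c = (\<lambda>(i,j). real (Suc i) *\<^sub>R c (Suc i, j))"

definition dps_deriv2 :: "(nat \<times> nat \<Rightarrow> 'a::real_normed_vector) \<Rightarrow> nat \<times> nat \<Rightarrow> 'a" where
  "dps_deriv2 c = (\<lambda>(i,j). real (Suc j) *\<^sub>R c (i, Suc j))"

definition dps_swap :: "(nat \<times> nat \<Rightarrow> 'a) \<Rightarrow> nat \<times> nat \<Rightarrow> 'a" where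
  "dps_swap c = (\<lambda>(i,j). c (j,i))"

lemma dps_deriv1_deriv2_commute: "dps_deriv1 (dps_deriv2 c) = dps_deriv2 (dps_deriv1 c)"
  by (simp add: dps_deriv1_def dps_deriv2_def fun_eq_iff)

lemma dps_deriv2_conv_swap: "dps_deriv2 c = dps_swap (dps_deriv1 (dps_swap c))"
  by (simp add: dps_swap_def dps_deriv1_def dps_deriv2_def fun_eq_iff)

lemma norm_cart_2: "norm (x::real^2) = sqrt ((x$1)^2 + (x$2)^2)"
  by (simp add: norm_vec_def L2_set_def sum_2)

lemma norm_less_iff_sum_squares_less:
  fixes h :: "real^2"
  assumes "0 < r"
  shows "norm h < r \<longleftrightarrow> (h$1)^2 + (h$2)^2 < r^2"
proof -
  have "r = sqrt (r^2)" using assms by simp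
  then show ?thesis by (metis norm_cart_2 real_sqrt_less_iff)
qed

lemma sum_squares_less_enlarge:
  fixes p q r :: real
  assumes "0 \<le> p" "0 \<le> q" "p^2 + q^2 < r^2"
  obtains p' q' where "p < p'" "q < q'" "p'^2 + q'^2 < r^2"
proof -
  define \<delta> where "\<delta> = r^2 - (p^2 + q^2)"
  define a where "a = min 1 (\<delta> / (4 * (2*p + 2*q + 1)))"
  have "\<delta> > 0" using assms by (simp add: \<delta>_def)
  then have a: "0 < a" "a \<le> 1" using assms by (auto simp: a_def)
  have "a \<le> \<delta> / (4 * (2*p + 2*q + 1))" by (simp add: a_def)
  then have "4*a + 8*(a*p) + 8*(a*q) \<le> \<delta>" using assms by (simp add: field_simps)
  moreover have "(p+a)^2 + (q+a)^2 = p^2 + q^2 + 2*(a*a) + 2*(a*p) + 2*(a*q)"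
    by (simp add: power2_eq_square algebra_simps)
  moreover have "a * a \<le> a" "a * p \<ge> 0" "a * q \<ge> 0"
    using a assms by (auto simp: mult_le_cancel_left1)
  ultimately have "(p+a)^2 + (q+a)^2 < r^2"
    using a unfolding \<delta>_def by linarith
  then show ?thesis using a by (intro that[of "p+a" "q+a"]) auto
qed

lemma Suc_times_power_bounded:
  fixes \<theta> :: real
  assumes "0 \<le> \<theta>" "\<theta> < 1"
  obtains B where "\<And>n. real (Suc n) * \<theta>^n \<le> B"
proof -
  have "(\<lambda>n. of_nat n * \<theta> ^ n) \<longlonglongrightarrow> 0"
    by (rule powser_times_n_limit_0) (use assms in simp)
  then obtain K where K: "\<And>n. norm (of_nat n * \<theta> ^ n) \<le> K"
    by (metis BseqE convergentI convergent_imp_Bseq)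
  have "real (Suc n) * \<theta>^n \<le> K + 1" for n
  proof -
    have "real (Suc n) * \<theta>^n = real n * \<theta>^n + \<theta>^n" by (simp add: algebra_simps)
    also have "\<dots> \<le> K + 1" using K[of n] power_le_one[OF assms(1) less_imp_le[OF assms(2)], of n] assms
      by (simp add: abs_mult)
    finally show ?thesis .
  qed
  then show ?thesis by (rule that)
qed

lemma dps_abs_conv_summable:
  assumes "dps_abs_conv c r" "0 \<le> p" "0 \<le> q" "p^2 + q^2 < r^2"
  shows "(\<lambda>(i,j). p^i * q^j * norm (c (i,j))) summable_on A"
  using assms unfolding dps_abs_conv_def by (meson subset_UNIV summable_on_subset)

lemma dps_abs_conv_deriv1:
  assumes "dps_abs_conv c r"
  shows "dps_abs_conv (dps_deriv1 c) r"
  unfolding dps_abs_conv_def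
proof (intro allI impI)
  fix p q :: real
  assume pq: "0 \<le> p" "0 \<le> q" "p^2 + q^2 < r^2"
  obtain p' q' where p': "p < p'" "q < q'" "p'^2 + q'^2 < r^2"
    using sum_squares_less_enlarge[OF pq] by blast
  have "p' > 0" using pq p' by linarith
  have "p'^2 + q^2 \<le> p'^2 + q'^2" using pq p' by (intro add_left_mono power_mono) auto
  then have "p'^2 + q^2 < r^2" using p' by linarith
  then have "(\<lambda>(i,j). p'^i * q^j * norm (c (i,j))) summable_on UNIV"
    using pq \<open>p' > 0\<close> by (intro dps_abs_conv_summable[OF assms]) auto
  moreover have "inj (\<lambda>(i::nat,j::nat). (Suc i, j))" by (auto simp: inj_def)
  ultimately have "((\<lambda>(i,j). p'^i * q^j * norm (c (i,j))) \<circ> (\<lambda>(i,j). (Suc i, j))) summable_on UNIV"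
    by (meson subset_UNIV summable_on_reindex summable_on_subset)
  then have shifted: "(\<lambda>(i,j). p'^Suc i * q^j * norm (c (Suc i, j))) summable_on UNIV"
    by (simp add: o_def case_prod_unfold)
  obtain B where B: "\<And>n. real (Suc n) * (p/p')^n \<le> B"
    using Suc_times_power_bounded[of "p/p'"] pq p' \<open>p' > 0\<close> by auto
  \<comment> \<open>the factor \<open>Suc i\<close> of the derived coefficients is absorbed by the ratio \<open>p/p' < 1\<close>\<close>
  have "p^i * q^j * norm (dps_deriv1 c (i,j)) \<le> (B / p') * (p'^Suc i * q^j * norm (c (Suc i, j)))" for i j
  proof -
    have "p^i * q^j * norm (dps_deriv1 c (i,j)) = (real (Suc i) * (p/p')^i) * (p'^i * q^j * norm (c (Suc i, j)))"
      using \<open>p' > 0\<close> by (simp add: dps_deriv1_def power_divide)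
    also have "\<dots> \<le> B * (p'^i * q^j * norm (c (Suc i, j)))"
      using B pq \<open>p' > 0\<close> by (intro mult_right_mono) auto
    finally show ?thesis using \<open>p' > 0\<close> by simp
  qed
  then show "(\<lambda>(i,j). p^i * q^j * norm (dps_deriv1 c (i,j))) summable_on UNIV"
    using pq by (intro summable_on_comparison_test[OF summable_on_cmult_right[OF shifted, of "B / p'"]])
      (auto simp: case_prod_unfold)
qed

lemma dps_abs_conv_swap:
  assumes "dps_abs_conv c r"
  shows "dps_abs_conv (dps_swap c) r"
  unfolding dps_abs_conv_def
proof (intro allI impI)
  fix p q :: real
  assume "0 \<le> p" "0 \<le> q" "p^2 + q^2 < r^2"
  then have "(\<lambda>(i,j). q^i * p^j * norm (c (i,j))) summable_on range prod.swap"
    using dps_abs_conv_summable[OF assms, of q p] by (simp add: add.commute)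
  then show "(\<lambda>(i,j). p^i * q^j * norm (dps_swap c (i,j))) summable_on UNIV"
    by (subst (asm) summable_on_reindex) (auto simp: dps_swap_def o_def case_prod_unfold prod.swap_def mult.commute)
qed

lemma dps_abs_conv_deriv2: "dps_abs_conv c r \<Longrightarrow> dps_abs_conv (dps_deriv2 c) r"
  by (simp add: dps_deriv2_conv_swap dps_abs_conv_swap dps_abs_conv_deriv1)

lemma has_sum_dps_eval:
  fixes c :: "nat \<times> nat \<Rightarrow> 'a::banach"
  assumes "dps_abs_conv c r" "norm h < r"
  shows "((\<lambda>(i,j). ((h$1)^i * (h$2)^j) *\<^sub>R c (i,j)) has_sum dps_eval c h) UNIV"
proof -
  have "0 < r" using assms(2) norm_ge_zero by (rule le_less_trans[rotated])
  then have "(h$1)^2 + (h$2)^2 < r^2"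
    using assms(2) norm_less_iff_sum_squares_less by blast
  then have "\<bar>h$1\<bar>^2 + \<bar>h$2\<bar>^2 < r^2" by simp
  then have "(\<lambda>(i,j). \<bar>h$1\<bar>^i * \<bar>h$2\<bar>^j * norm (c (i,j))) summable_on UNIV"
    by (rule dps_abs_conv_summable[OF assms(1) abs_ge_zero abs_ge_zero])
  then have "(\<lambda>k. norm ((\<lambda>(i,j). ((h$1)^i * (h$2)^j) *\<^sub>R c (i,j)) k)) summable_on UNIV"
    by (simp add: case_prod_unfold abs_mult power_abs)
  then show ?thesis
    unfolding dps_eval_def by (rule has_sum_infsum[OF abs_summable_summable])
qed

lemma has_sum_reindex_vanishing:
  assumes "inj h" "\<And>k. k \<notin> range h \<Longrightarrow> g k = 0"
  shows "(g has_sum s) UNIV \<longleftrightarrow> ((g \<circ> h) has_sum s) UNIV"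
proof -
  have "(g has_sum s) UNIV \<longleftrightarrow> (g has_sum s) (range h)"
    by (rule has_sum_cong_neutral) (use assms(2) in auto)
  also have "\<dots> \<longleftrightarrow> ((g \<circ> h) has_sum s) UNIV"
    by (rule has_sum_reindex) (use assms(1) in \<open>simp add: inj_on_def\<close>)
  finally show ?thesis .
qed

lemma has_sum_dps_eval_deriv1:
  fixes c :: "nat \<times> nat \<Rightarrow> 'a::banach"
  assumes "dps_abs_conv c r" "norm h < r"
  shows "((\<lambda>(i,j). (real i * (h$1)^(i-1) * (h$2)^j) *\<^sub>R c (i,j)) has_sum dps_eval (dps_deriv1 c) h) UNIV"
proof (subst has_sum_reindex_vanishing[where h = "\<lambda>(i,j). (Suc i, j)"])
  show "inj (\<lambda>(i::nat, j::nat). (Suc i, j))" by (auto simp: inj_def)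
  show "(case k of (i,j) \<Rightarrow> (real i * (h$1)^(i-1) * (h$2)^j) *\<^sub>R c (i,j)) = 0"
    if "k \<notin> range (\<lambda>(i,j). (Suc i, j))" for k
    using that by (cases k) (auto simp: image_iff gr0_conv_Suc)
  have "(\<lambda>(i,j). (real i * (h$1)^(i-1) * (h$2)^j) *\<^sub>R c (i,j)) \<circ> (\<lambda>(i,j). (Suc i, j))
      = (\<lambda>(i,j). ((h$1)^i * (h$2)^j) *\<^sub>R dps_deriv1 c (i,j))"
    by (auto simp: fun_eq_iff dps_deriv1_def mult_ac)
  then show "(((\<lambda>(i,j). (real i * (h$1)^(i-1) * (h$2)^j) *\<^sub>R c (i,j)) \<circ> (\<lambda>(i,j). (Suc i, j)))
      has_sum dps_eval (dps_deriv1 c) h) UNIV"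
    using has_sum_dps_eval[OF dps_abs_conv_deriv1[OF assms(1)] assms(2)] by simp
qed

lemma has_sum_dps_eval_deriv2:
  fixes c :: "nat \<times> nat \<Rightarrow> 'a::banach"
  assumes "dps_abs_conv c r" "norm h < r"
  shows "((\<lambda>(i,j). (real j * (h$1)^i * (h$2)^(j-1)) *\<^sub>R c (i,j)) has_sum dps_eval (dps_deriv2 c) h) UNIV"
proof (subst has_sum_reindex_vanishing[where h = "\<lambda>(i,j). (i, Suc j)"])
  show "inj (\<lambda>(i::nat, j::nat). (i, Suc j))" by (auto simp: inj_def)
  show "(case k of (i,j) \<Rightarrow> (real j * (h$1)^i * (h$2)^(j-1)) *\<^sub>R c (i,j)) = 0"
    if "k \<notin> range (\<lambda>(i,j). (i, Suc j))" for k
    using that by (cases k) (auto simp: image_iff gr0_conv_Suc)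
  have "(\<lambda>(i,j). (real j * (h$1)^i * (h$2)^(j-1)) *\<^sub>R c (i,j)) \<circ> (\<lambda>(i,j). (i, Suc j))
      = (\<lambda>(i,j). ((h$1)^i * (h$2)^j) *\<^sub>R dps_deriv2 c (i,j))"
    by (auto simp: fun_eq_iff dps_deriv2_def mult_ac)
  then show "(((\<lambda>(i,j). (real j * (h$1)^i * (h$2)^(j-1)) *\<^sub>R c (i,j)) \<circ> (\<lambda>(i,j). (i, Suc j)))
      has_sum dps_eval (dps_deriv2 c) h) UNIV"
    using has_sum_dps_eval[OF dps_abs_conv_deriv2[OF assms(1)] assms(2)] by simp
qed

lemma dps_termwise_deriv_summable:
  fixes c :: "nat \<times> nat \<Rightarrow> 'a::banach"
  assumes c: "dps_abs_conv c r" and pq: "0 \<le> p" "0 \<le> q" "p^2 + q^2 < r^2"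
  shows "(\<lambda>(i,j). (real i * p^(i-1) * q^j + real j * p^i * q^(j-1)) * norm (c (i,j))) summable_on UNIV"
proof -
  have "r \<noteq> 0" using pq(3) by (metis add_nonneg_nonneg not_less power_zero_numeral zero_le_power2)
  then have pq_norm: "norm (vector [p, q] :: real^2) < \<bar>r\<bar>"
    using pq(3) by (simp add: norm_less_iff_sum_squares_less)
  have cn: "dps_abs_conv (\<lambda>k. norm (c k)) \<bar>r\<bar>"
    using c by (simp add: dps_abs_conv_def)
  have "(\<lambda>(i,j). real i * p^(i-1) * q^j * norm (c (i,j))) summable_on UNIV"
    using has_sum_dps_eval_deriv1[OF cn pq_norm] by (simp add: summable_on_def case_prod_unfold) blast
  moreover have "(\<lambda>(i,j). real j * p^i * q^(j-1) * norm (c (i,j))) summable_on UNIV"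
    using has_sum_dps_eval_deriv2[OF cn pq_norm] by (simp add: summable_on_def case_prod_unfold) blast
  ultimately show ?thesis
    by (simp add: case_prod_unfold distrib_right summable_on_add)
qed

lemma norm_monomial_deriv_le:
  fixes c :: "'a::real_normed_vector" and h v :: "real^2"
  assumes "\<bar>h$1\<bar> \<le> p" "\<bar>h$2\<bar> \<le> q"
  shows "norm (v$1 *\<^sub>R ((real i * (h$1)^(i-1) * (h$2)^j) *\<^sub>R c) + v$2 *\<^sub>R ((real j * (h$1)^i * (h$2)^(j-1)) *\<^sub>R c))
    \<le> ((real i * p^(i-1) * q^j + real j * p^i * q^(j-1)) * norm c) * norm v"
proof -
  define a1 b1 a2 b2 where "a1 = real i * (h$1)^(i-1) * (h$2)^j" and "b1 = real i * p^(i-1) * q^j"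
    and "a2 = real j * (h$1)^i * (h$2)^(j-1)" and "b2 = real j * p^i * q^(j-1)"
  have "0 \<le> p" "0 \<le> q" using assms by (auto intro: order_trans[OF abs_ge_zero])
  have "\<bar>h$1\<bar>^n \<le> p^n" "\<bar>h$2\<bar>^n \<le> q^n" for n
    using assms by (auto intro: power_mono)
  then have "\<bar>a1\<bar> \<le> b1" "\<bar>a2\<bar> \<le> b2"
    using \<open>0 \<le> p\<close> \<open>0 \<le> q\<close> unfolding a1_def b1_def a2_def b2_def
    by (auto simp: abs_mult power_abs intro!: mult_mono mult_left_mono)
  moreover have "\<bar>v$1\<bar> \<le> norm v" "\<bar>v$2\<bar> \<le> norm v" by (simp_all add: component_le_norm_cart)
  ultimately have le: "\<bar>v$1\<bar> * \<bar>a1\<bar> + \<bar>v$2\<bar> * \<bar>a2\<bar> \<le> norm v * b1 + norm v * b2"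
    by (intro add_mono mult_mono) auto
  have "norm (v$1 *\<^sub>R (a1 *\<^sub>R c) + v$2 *\<^sub>R (a2 *\<^sub>R c)) \<le> (\<bar>v$1\<bar> * \<bar>a1\<bar> + \<bar>v$2\<bar> * \<bar>a2\<bar>) * norm c"
    using norm_triangle_ineq[of "v$1 *\<^sub>R (a1 *\<^sub>R c)" "v$2 *\<^sub>R (a2 *\<^sub>R c)"]
    by (simp add: distrib_right mult.assoc abs_mult)
  also have "\<dots> \<le> (norm v * b1 + norm v * b2) * norm c"
    using le by (rule mult_right_mono) simp
  also have "\<dots> = ((b1 + b2) * norm c) * norm v"
    by (simp add: algebra_simps)
  finally have "norm (v$1 *\<^sub>R (a1 *\<^sub>R c) + v$2 *\<^sub>R (a2 *\<^sub>R c)) \<le> ((b1 + b2) * norm c) * norm v" .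
  then show ?thesis by (simp add: a1_def b1_def a2_def b2_def)
qed

lemma box_nbhd_in_ball_cart_2E:
  fixes h0 :: "real^2"
  assumes "norm h0 < r"
  obtains p q where "0 < p" "0 < q" "p^2 + q^2 < r^2" "h0 \<in> box (vector [-p, -q]) (vector [p, q])"
    "\<And>h::real^2. h \<in> box (vector [-p, -q]) (vector [p, q]) \<Longrightarrow> \<bar>h$1\<bar> < p \<and> \<bar>h$2\<bar> < q \<and> norm h < r"
proof -
  have "0 < r" using assms norm_ge_zero by (rule le_less_trans[rotated])
  then have "\<bar>h0$1\<bar>^2 + \<bar>h0$2\<bar>^2 < r^2" using assms by (simp add: norm_less_iff_sum_squares_less)
  then obtain p q where pq: "\<bar>h0$1\<bar> < p" "\<bar>h0$2\<bar> < q" "p^2 + q^2 < r^2"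
    using sum_squares_less_enlarge[of "\<bar>h0$1\<bar>" "\<bar>h0$2\<bar>" r] by auto
  have box: "h \<in> box (vector [-p, -q]) (vector [p, q]) \<longleftrightarrow> \<bar>h$1\<bar> < p \<and> \<bar>h$2\<bar> < q" for h :: "real^2"
    by (auto simp: mem_box_cart forall_2 abs_less_iff)
  have norm: "norm h < r" if "\<bar>h$1\<bar> < p" "\<bar>h$2\<bar> < q" for h :: "real^2"
  proof -
    have "(h$1)^2 \<le> p^2" "(h$2)^2 \<le> q^2"
      using that by (auto simp: abs_le_square_iff[symmetric])
    then show ?thesis using pq(3) \<open>0 < r\<close> by (simp add: norm_less_iff_sum_squares_less)
  qed
  show ?thesis
  proof (rule that[of p q])
    show "0 < p" "0 < q" using pq(1,2) by (auto intro: le_less_trans)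
    show "h \<in> box (vector [-p, -q]) (vector [p, q]) \<Longrightarrow> \<bar>h$1\<bar> < p \<and> \<bar>h$2\<bar> < q \<and> norm h < r"
      for h :: "real^2"
      using box norm by blast
  qed (use pq box in auto)
qed

lemma has_sum_dps_eval_termwise_deriv:
  fixes c :: "nat \<times> nat \<Rightarrow> 'a::banach"
  assumes "dps_abs_conv c r" "norm h < r"
  shows "((\<lambda>(i,j). v$1 *\<^sub>R ((real i * (h$1)^(i-1) * (h$2)^j) *\<^sub>R c (i,j))
                  + v$2 *\<^sub>R ((real j * (h$1)^i * (h$2)^(j-1)) *\<^sub>R c (i,j)))
           has_sum (v$1 *\<^sub>R dps_eval (dps_deriv1 c) h + v$2 *\<^sub>R dps_eval (dps_deriv2 c) h)) UNIV"
  using has_sum_add[OF has_sum_scaleR[OF has_sum_dps_eval_deriv1[OF assms]]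
      has_sum_scaleR[OF has_sum_dps_eval_deriv2[OF assms]]]
  by (simp add: case_prod_unfold)

lemma has_derivative_dps_eval:
  fixes c :: "nat \<times> nat \<Rightarrow> 'a::banach"
  assumes c: "dps_abs_conv c r" and h0: "norm h0 < r"
  shows "(dps_eval c has_derivative
           (\<lambda>v. v$1 *\<^sub>R dps_eval (dps_deriv1 c) h0 + v$2 *\<^sub>R dps_eval (dps_deriv2 c) h0)) (at h0)"
proof -
  obtain p q where pq: "0 < p" "0 < q" "p^2 + q^2 < r^2" and h0_S: "h0 \<in> box (vector [-p, -q]) (vector [p, q])"
    and S: "\<And>h::real^2. h \<in> box (vector [-p, -q]) (vector [p, q]) \<Longrightarrow> \<bar>h$1\<bar> < p \<and> \<bar>h$2\<bar> < q \<and> norm h < r"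
    by (rule box_nbhd_in_ball_cart_2E[OF h0]) blast
  define f where "f = (\<lambda>(i,j) (h::real^2). ((h$1)^i * (h$2)^j) *\<^sub>R c (i,j))"
  define f' where "f' = (\<lambda>(i,j) (h::real^2) (v::real^2). v$1 *\<^sub>R ((real i * (h$1)^(i-1) * (h$2)^j) *\<^sub>R c (i,j))
                  + v$2 *\<^sub>R ((real j * (h$1)^i * (h$2)^(j-1)) *\<^sub>R c (i,j)))"
  have df: "(f k has_derivative f' k h) (at h within S')" for k h S'
    unfolding f_def f'_def case_prod_unfold
    by (auto intro!: derivative_eq_intros bounded_linear_imp_has_derivative bounded_linear_vec_nth
        simp: algebra_simps)
  have "((\<lambda>h. infsum (\<lambda>k. f k h) UNIV) has_derivative (\<lambda>v. infsum (\<lambda>k. f' k h0 v) UNIV))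
      (at h0 within box (vector [-p, -q]) (vector [p, q]))"
  proof (rule has_derivative_infsum[OF convex_box(2) df _
        dps_termwise_deriv_summable[OF c less_imp_le[OF pq(1)] less_imp_le[OF pq(2)] pq(3)] _ h0_S])
    show "norm (f' k h v) \<le> (case k of (i,j) \<Rightarrow> (real i * p^(i-1) * q^j + real j * p^i * q^(j-1)) * norm (c (i,j))) * norm v"
      if "h \<in> box (vector [-p, -q]) (vector [p, q])" for k and h v :: "real^2"
      using S[OF that] norm_monomial_deriv_le[where h = h and p = p and q = q and v = v]
      by (simp add: f'_def case_prod_unfold less_imp_le)
    show "(\<lambda>k. f k h) summable_on UNIV" if "h \<in> box (vector [-p, -q]) (vector [p, q])" for h :: "real^2"
      using has_sum_dps_eval[OF c] S[OF that] unfolding f_def summable_on_def case_prod_unfold by blast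
  qed
  moreover have "infsum (\<lambda>k. f' k h0 v) UNIV = v$1 *\<^sub>R dps_eval (dps_deriv1 c) h0 + v$2 *\<^sub>R dps_eval (dps_deriv2 c) h0" for v
    using infsumI[OF has_sum_dps_eval_termwise_deriv[OF c h0, of v]] by (simp add: f'_def case_prod_unfold)
  moreover have "(\<lambda>h. infsum (\<lambda>k. f k h) UNIV) = dps_eval c"
    by (simp add: fun_eq_iff dps_eval_def f_def case_prod_unfold)
  ultimately show ?thesis
    using at_within_open[OF h0_S open_box] by simp
qed

lemma summable_on_finite_sum:
  fixes g :: "'i \<Rightarrow> 'k \<Rightarrow> real"
  assumes "finite F" "\<And>i. i \<in> F \<Longrightarrow> g i summable_on A"
  shows "(\<lambda>x. \<Sum>i\<in>F. g i x) summable_on A"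
  using assms by (induction F rule: finite_induct) (simp_all add: summable_on_add)

lemma summable_on_norm_cart:
  fixes f :: "'k \<Rightarrow> real^'n"
  assumes "f summable_on A"
  shows "(\<lambda>x. norm (f x)) summable_on A"
proof -
  have "(\<lambda>x. f x $ i) summable_on A" for i
    by (rule summable_on_bounded_linear[OF bounded_linear_vec_nth assms])
  then have "(\<lambda>x. \<bar>f x $ i\<bar>) summable_on A" for i
    using summable_on_iff_abs_summable_on_real by force
  then have "(\<lambda>x. \<Sum>i\<in>UNIV. \<bar>f x $ i\<bar>) summable_on A"
    by (intro summable_on_finite_sum) auto
  then show ?thesis
    by (rule summable_on_comparison_test) (auto simp: norm_le_l1_cart)
qed

lemma analytic2_on_local_dps:
  fixes f :: "real^2 \<Rightarrow> real^'n"
  assumes "analytic2_on U f" "a \<in> U"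
  obtains r c where "r > 0" "ball a r \<subseteq> U" "dps_abs_conv c r"
    "\<And>h. norm h < r \<Longrightarrow> f (a + h) = dps_eval c h"
proof -
  obtain r c where r: "r > 0" "ball a r \<subseteq> U"
    and hs: "\<And>h. norm h < r \<Longrightarrow> ((\<lambda>(i,j). ((h$1)^i * (h$2)^j) *\<^sub>R c (i,j)) has_sum f (a + h)) UNIV"
    using assms unfolding analytic2_on_def by blast
  have "dps_abs_conv c r"
    unfolding dps_abs_conv_def
  proof (intro allI impI)
    fix p q :: real assume pq: "0 \<le> p" "0 \<le> q" "p^2 + q^2 < r^2"
    then have "norm (vector [p, q] :: real^2) < r"
      using r by (simp add: norm_less_iff_sum_squares_less)
    then have "(\<lambda>(i,j). (p^i * q^j) *\<^sub>R c (i,j)) summable_on UNIV"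
      using hs summable_on_def by fastforce
    then show "(\<lambda>(i,j). p^i * q^j * norm (c (i,j))) summable_on UNIV"
      using summable_on_norm_cart pq by (fastforce simp: case_prod_unfold abs_mult)
  qed
  moreover have "f (a + h) = dps_eval c h" if "norm h < r" for h
    using hs[OF that] unfolding dps_eval_def by (simp add: infsumI)
  ultimately show ?thesis using r that by blast
qed

definition partial_deriv :: "(real^2 \<Rightarrow> 'a::real_normed_vector) \<Rightarrow> 2 \<Rightarrow> real^2 \<Rightarrow> 'a" where
  "partial_deriv f j v = frechet_derivative f (at v) (axis j 1)"

definition dps_pderiv :: "2 \<Rightarrow> (nat \<times> nat \<Rightarrow> 'a::real_normed_vector) \<Rightarrow> nat \<times> nat \<Rightarrow> 'a" where
  "dps_pderiv j c = (if j = 1 then dps_deriv1 c else dps_deriv2 c)"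

lemma dps_abs_conv_pderiv: "dps_abs_conv c r \<Longrightarrow> dps_abs_conv (dps_pderiv j c) r"
  by (simp add: dps_pderiv_def dps_abs_conv_deriv1 dps_abs_conv_deriv2)

lemma dps_pderiv_commute: "dps_pderiv i (dps_pderiv j c) = dps_pderiv j (dps_pderiv i c)"
  by (auto simp: dps_pderiv_def dps_deriv1_deriv2_commute)

lemma column_jacobian: "column j (jacobian f (at v)) = partial_deriv f j v"
  by (simp add: column_def jacobian_def matrix_def partial_deriv_def vec_eq_iff)

context
  fixes f :: "real^2 \<Rightarrow> 'a::banach" and c r a
  assumes c: "dps_abs_conv c r" and f: "\<And>h. norm h < r \<Longrightarrow> f (a + h) = dps_eval c h"
begin

lemma local_dps_has_derivative:
  assumes "v \<in> ball a r"
  shows "(f has_derivative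
           (\<lambda>w. w$1 *\<^sub>R dps_eval (dps_deriv1 c) (v - a) + w$2 *\<^sub>R dps_eval (dps_deriv2 c) (v - a))) (at v)"
proof -
  have "norm (v - a) < r" using assms by (simp add: dist_norm norm_minus_commute)
  from has_derivative_compose[OF has_derivative_diff[OF has_derivative_ident has_derivative_const]
      has_derivative_dps_eval[OF c this]]
  have "((\<lambda>y. dps_eval c (y - a)) has_derivative
      (\<lambda>w. w$1 *\<^sub>R dps_eval (dps_deriv1 c) (v - a) + w$2 *\<^sub>R dps_eval (dps_deriv2 c) (v - a))) (at v)"
    by simp
  then show ?thesis
  proof (rule has_derivative_transform_within_open[OF _ open_ball assms])
    fix y assume "y \<in> ball a r"
    then have "norm (y - a) < r" by (simp add: dist_norm norm_minus_commute)
    then show "dps_eval c (y - a) = f y" using f[of "y - a"] by simp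
  qed
qed

lemma local_dps_differentiable: "v \<in> ball a r \<Longrightarrow> f differentiable (at v)"
  using local_dps_has_derivative by (auto simp: differentiable_def)

lemma local_dps_partial_deriv:
  assumes "norm h < r"
  shows "partial_deriv f j (a + h) = dps_eval (dps_pderiv j c) h"
proof -
  have "a + h \<in> ball a r" using assms by (simp add: dist_norm)
  from frechet_derivative_at[OF local_dps_has_derivative[OF this], symmetric]
  show ?thesis using exhaust_2[of j] by (auto simp: partial_deriv_def dps_pderiv_def axis_def)
qed

end

lemma analytic2_on_differentiable:
  fixes f :: "real^2 \<Rightarrow> real^'n"
  assumes "analytic2_on U f" "u \<in> U"
  shows "f differentiable (at u)"
proof -
  obtain r c where "r > 0" "dps_abs_conv c r" "\<And>h. norm h < r \<Longrightarrow> f (u + h) = dps_eval c h"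
    using analytic2_on_local_dps[OF assms] by metis
  then show ?thesis using local_dps_differentiable[of c r f u u] by simp
qed

lemma analytic2_on_partial_deriv:
  fixes f :: "real^2 \<Rightarrow> real^'n"
  assumes "analytic2_on U f"
  shows "analytic2_on U (partial_deriv f j)"
  unfolding analytic2_on_def
proof
  fix a assume "a \<in> U"
  then obtain r c where r: "r > 0" "ball a r \<subseteq> U" "dps_abs_conv c r"
    and f: "\<And>h. norm h < r \<Longrightarrow> f (a + h) = dps_eval c h"
    using analytic2_on_local_dps[OF assms] by metis
  have "((\<lambda>(i,j). ((h$1)^i * (h$2)^j) *\<^sub>R dps_pderiv j' c (i,j)) has_sum partial_deriv f j' (a + h)) UNIV"
    if "norm h < r" for h j'
    using has_sum_dps_eval[OF dps_abs_conv_pderiv[OF r(3)] that] local_dps_partial_deriv[OF r(3) f that]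
    by simp
  then show "\<exists>r>0. ball a r \<subseteq> U \<and> (\<exists>c. \<forall>h. norm h < r \<longrightarrow>
      ((\<lambda>(i,j). ((h$1)^i * (h$2)^j) *\<^sub>R c (i,j)) has_sum partial_deriv f j (a + h)) UNIV)"
    using r by blast
qed

lemma analytic2_on_partial_deriv_commute:
  fixes f :: "real^2 \<Rightarrow> real^'n"
  assumes "analytic2_on U f" "u \<in> U"
  shows "partial_deriv (partial_deriv f j) i u = partial_deriv (partial_deriv f i) j u"
proof -
  obtain r c where r: "r > 0" "dps_abs_conv c r" and f: "\<And>h. norm h < r \<Longrightarrow> f (u + h) = dps_eval c h"
    using analytic2_on_local_dps[OF assms] by metis
  have "partial_deriv (partial_deriv f l) k u = dps_eval (dps_pderiv k (dps_pderiv l c)) 0" for k l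
    using local_dps_partial_deriv[OF dps_abs_conv_pderiv[OF r(2)] local_dps_partial_deriv[OF r(2) f], of 0] r(1)
    by simp
  then show ?thesis by (simp add: dps_pderiv_commute)
qed

lemma analytic2_on_continuous_on:
  fixes f :: "real^2 \<Rightarrow> real^'n"
  assumes "analytic2_on U f" "open U"
  shows "continuous_on U f"
  using analytic2_on_differentiable[OF assms(1)] assms(2)
  by (simp add: continuous_on_eq_continuous_at differentiable_imp_continuous_within)

lemma analytic2_on_continuous_on_jacobian:
  fixes f :: "real^2 \<Rightarrow> real^'n"
  assumes "analytic2_on U f" "open U"
  shows "continuous_on U (\<lambda>u. jacobian f (at u))"
proof -
  have "continuous_on U (partial_deriv f j)" for j
    by (rule analytic2_on_continuous_on[OF analytic2_on_partial_deriv[OF assms(1)] assms(2)])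
  then have "continuous_on U (\<lambda>u. \<chi> i j. partial_deriv f j u $ i)"
    by (intro continuous_intros)
  moreover have "jacobian f (at u) = (\<chi> i j. partial_deriv f j u $ i)" for u
    by (simp add: jacobian_def matrix_def partial_deriv_def)
  ultimately show ?thesis by simp
qed

section \<open>Symmetry of second derivatives\<close>

lemma has_real_derivative_along_line:
  fixes g :: "real^2 \<Rightarrow> real"
  assumes "g differentiable (at (w + t *\<^sub>R e))"
  shows "((\<lambda>s. g (w + s *\<^sub>R e)) has_real_derivative frechet_derivative g (at (w + t *\<^sub>R e)) e) (at t)"
proof -
  have dg: "(g has_derivative frechet_derivative g (at (w + t *\<^sub>R e))) (at (w + t *\<^sub>R e))"
    using assms by (rule frechet_derivative_works[THEN iffD1])
  have "((\<lambda>s. w + s *\<^sub>R e) has_derivative (\<lambda>s. s *\<^sub>R e)) (at t)"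
    by (auto intro!: derivative_eq_intros)
  from has_derivative_compose[OF this dg]
  have "((\<lambda>s. g (w + s *\<^sub>R e)) has_derivative (\<lambda>s. frechet_derivative g (at (w + t *\<^sub>R e)) (s *\<^sub>R e))) (at t)"
    by (simp add: o_def)
  moreover have "frechet_derivative g (at (w + t *\<^sub>R e)) (s *\<^sub>R e) = frechet_derivative g (at (w + t *\<^sub>R e)) e * s" for s
    using linear_scale[OF has_derivative_linear[OF dg]] by simp
  ultimately show ?thesis by (simp add: has_field_derivative_def)
qed

lemma second_difference_mean_value:
  fixes \<phi> :: "real^2 \<Rightarrow> real" and j l :: 2
  defines "e \<equiv> axis j (1::real)" and "e' \<equiv> axis l (1::real)"
  assumes s: "0 < s"
    and inU: "\<And>a b. 0 \<le> a \<Longrightarrow> a \<le> s \<Longrightarrow> 0 \<le> b \<Longrightarrow> b \<le> s \<Longrightarrow> u + a *\<^sub>R e + b *\<^sub>R e' \<in> U"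
    and d0: "\<And>v. v \<in> U \<Longrightarrow> \<phi> differentiable (at v)"
    and d1: "\<And>v. v \<in> U \<Longrightarrow> partial_deriv \<phi> j differentiable (at v)"
  obtains a b where "0 < a" "a < s" "0 < b" "b < s"
    "\<phi> (u + s *\<^sub>R e + s *\<^sub>R e') - \<phi> (u + s *\<^sub>R e) - \<phi> (u + s *\<^sub>R e') + \<phi> u
       = s * (s * partial_deriv (partial_deriv \<phi> j) l (u + a *\<^sub>R e + b *\<^sub>R e'))"
proof -
  define A where "A t = \<phi> (u + s *\<^sub>R e' + t *\<^sub>R e) - \<phi> (u + t *\<^sub>R e)" for t
  have "DERIV A t :> partial_deriv \<phi> j (u + s *\<^sub>R e' + t *\<^sub>R e) - partial_deriv \<phi> j (u + t *\<^sub>R e)"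
    if "0 \<le> t" "t \<le> s" for t
    using inU[of t s] inU[of t 0] that s unfolding A_def partial_deriv_def e_def
    by (intro DERIV_diff has_real_derivative_along_line d0) (auto simp: algebra_simps)
  from MVT2[OF s this] obtain a where a: "0 < a" "a < s"
    "A s - A 0 = s * (partial_deriv \<phi> j (u + s *\<^sub>R e' + a *\<^sub>R e) - partial_deriv \<phi> j (u + a *\<^sub>R e))"
    by auto
  define B where "B t = partial_deriv \<phi> j (u + a *\<^sub>R e + t *\<^sub>R e')" for t
  have "DERIV B t :> partial_deriv (partial_deriv \<phi> j) l (u + a *\<^sub>R e + t *\<^sub>R e')"
    if "0 \<le> t" "t \<le> s" for t
    using inU[of a t] that a unfolding B_def partial_deriv_def[of "partial_deriv \<phi> j"] e'_def
    by (intro has_real_derivative_along_line d1) auto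
  from MVT2[OF s this] obtain b where b: "0 < b" "b < s"
    "B s - B 0 = s * partial_deriv (partial_deriv \<phi> j) l (u + a *\<^sub>R e + b *\<^sub>R e')"
    by auto
  have "\<phi> (u + s *\<^sub>R e + s *\<^sub>R e') - \<phi> (u + s *\<^sub>R e) - \<phi> (u + s *\<^sub>R e') + \<phi> u = A s - A 0"
    by (simp add: A_def algebra_simps)
  also have "\<dots> = s * (B s - B 0)" using a by (simp add: B_def algebra_simps)
  finally show ?thesis using a b that by simp
qed

lemma mixed_partials_meet_in_ball:
  fixes \<phi> :: "real^2 \<Rightarrow> real"
  assumes "0 < \<delta>" "ball u \<delta> \<subseteq> U"
    and d0: "\<And>v. v \<in> U \<Longrightarrow> \<phi> differentiable (at v)"
    and d1: "\<And>v k. v \<in> U \<Longrightarrow> partial_deriv \<phi> k differentiable (at v)"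
  obtains p q where "dist p u < \<delta>" "dist q u < \<delta>"
    "partial_deriv (partial_deriv \<phi> 1) 2 p = partial_deriv (partial_deriv \<phi> 2) 1 q"
proof -
  define e1 :: "real^2" where "e1 = axis 1 1"
  define e2 :: "real^2" where "e2 = axis 2 1"
  define s where "s = \<delta> / 4"
  have s: "0 < s" using assms(1) by (simp add: s_def)
  have near: "dist (u + a *\<^sub>R e1 + b *\<^sub>R e2) u < \<delta>" if "0 \<le> a" "a \<le> s" "0 \<le> b" "b \<le> s" for a b
  proof -
    have "dist (u + a *\<^sub>R e1 + b *\<^sub>R e2) u \<le> norm (a *\<^sub>R e1) + norm (b *\<^sub>R e2)"
      unfolding dist_norm by (simp add: norm_triangle_ineq del: norm_scaleR)
    also have "\<dots> < \<delta>" using that assms(1) by (simp add: e1_def e2_def s_def)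
    finally show ?thesis .
  qed
  then have inU: "u + a *\<^sub>R e1 + b *\<^sub>R e2 \<in> U" "u + a *\<^sub>R e2 + b *\<^sub>R e1 \<in> U"
    if "0 \<le> a" "a \<le> s" "0 \<le> b" "b \<le> s" for a b
    using that assms(2) near[of b a] by (auto simp: dist_commute algebra_simps)
  \<comment> \<open>the same second difference, expanded in the two possible orders\<close>
  obtain a b where ab: "0 < a" "a < s" "0 < b" "b < s"
    and D12: "\<phi> (u + s *\<^sub>R e1 + s *\<^sub>R e2) - \<phi> (u + s *\<^sub>R e1) - \<phi> (u + s *\<^sub>R e2) + \<phi> u
       = s * (s * partial_deriv (partial_deriv \<phi> 1) 2 (u + a *\<^sub>R e1 + b *\<^sub>R e2))"
    by (rule second_difference_mean_value[where \<phi>=\<phi> and u=u and U=U and j=1 and l=2, folded e1_def e2_def])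
      (use s inU(1) d0 d1 in auto)
  obtain a' b' where ab': "0 < a'" "a' < s" "0 < b'" "b' < s"
    and D21: "\<phi> (u + s *\<^sub>R e2 + s *\<^sub>R e1) - \<phi> (u + s *\<^sub>R e2) - \<phi> (u + s *\<^sub>R e1) + \<phi> u
       = s * (s * partial_deriv (partial_deriv \<phi> 2) 1 (u + a' *\<^sub>R e2 + b' *\<^sub>R e1))"
    by (rule second_difference_mean_value[where \<phi>=\<phi> and u=u and U=U and j=2 and l=1, folded e1_def e2_def])
      (use s inU(2) d0 d1 in auto)
  have "partial_deriv (partial_deriv \<phi> 1) 2 (u + a *\<^sub>R e1 + b *\<^sub>R e2)
      = partial_deriv (partial_deriv \<phi> 2) 1 (u + b' *\<^sub>R e1 + a' *\<^sub>R e2)"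
    using s D12 D21 by (simp add: algebra_simps)
  moreover have "dist (u + a *\<^sub>R e1 + b *\<^sub>R e2) u < \<delta>" "dist (u + b' *\<^sub>R e1 + a' *\<^sub>R e2) u < \<delta>"
    using near ab ab' by auto
  ultimately show ?thesis using that by blast
qed

lemma partial_deriv_commute_C2:
  fixes \<phi> :: "real^2 \<Rightarrow> real"
  assumes U: "open U" "u \<in> U"
    and d0: "\<And>v. v \<in> U \<Longrightarrow> \<phi> differentiable (at v)"
    and d1: "\<And>v k. v \<in> U \<Longrightarrow> partial_deriv \<phi> k differentiable (at v)"
    and c2: "\<And>k l. continuous_on U (partial_deriv (partial_deriv \<phi> k) l)"
  shows "partial_deriv (partial_deriv \<phi> i) j u = partial_deriv (partial_deriv \<phi> j) i u"
proof -
  define g12 where "g12 = partial_deriv (partial_deriv \<phi> 1) 2"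
  define g21 where "g21 = partial_deriv (partial_deriv \<phi> 2) 1"
  have "g12 u = g21 u"
  proof (rule ccontr)
    assume "g12 u \<noteq> g21 u"
    then have \<epsilon>: "\<bar>g12 u - g21 u\<bar> / 2 > 0" by simp
    have "isCont g12 u" "isCont g21 u"
      using c2 U by (simp_all add: g12_def g21_def continuous_on_eq_continuous_at)
    then obtain \<delta>1 \<delta>2 where "\<delta>1 > 0" "\<And>v. dist v u < \<delta>1 \<Longrightarrow> dist (g12 v) (g12 u) < \<bar>g12 u - g21 u\<bar> / 2"
      and "\<delta>2 > 0" "\<And>v. dist v u < \<delta>2 \<Longrightarrow> dist (g21 v) (g21 u) < \<bar>g12 u - g21 u\<bar> / 2"
      using \<epsilon> unfolding continuous_at_eps_delta by metis
    moreover obtain \<delta>0 where "\<delta>0 > 0" "ball u \<delta>0 \<subseteq> U" using U open_contains_ball by blast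
    ultimately obtain \<delta> where \<delta>: "\<delta> > 0" "ball u \<delta> \<subseteq> U"
      and close: "\<And>v. dist v u < \<delta> \<Longrightarrow> \<bar>g12 v - g12 u\<bar> < \<bar>g12 u - g21 u\<bar> / 2 \<and> \<bar>g21 v - g21 u\<bar> < \<bar>g12 u - g21 u\<bar> / 2"
      by (intro that[of "min \<delta>0 (min \<delta>1 \<delta>2)"]) (auto simp: dist_real_def)
    obtain p q where pq: "dist p u < \<delta>" "dist q u < \<delta>" "g12 p = g21 q"
      unfolding g12_def g21_def by (rule mixed_partials_meet_in_ball[OF \<delta> d0 d1]) blast+
    then have "\<bar>g12 p - g12 u\<bar> < \<bar>g12 u - g21 u\<bar> / 2" "\<bar>g21 q - g21 u\<bar> < \<bar>g12 u - g21 u\<bar> / 2"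
      using close[OF pq(1)] close[OF pq(2)] by auto
    then show False using pq(3) by (simp add: abs_less_iff abs_if split: if_splits)
  qed
  then show ?thesis
    using exhaust_2[of i] exhaust_2[of j] by (auto simp: g12_def g21_def)
qed

lemma analytic1_on_local_dps:
  fixes \<gamma> :: "real \<Rightarrow> real^2"
  assumes "analytic1_on I \<gamma>" "t0 \<in> I"
  obtains r c where "r > 0" "ball t0 r \<subseteq> I" "dps_abs_conv c r"
    "\<And>s. \<bar>s\<bar> < r \<Longrightarrow> \<gamma> (t0 + s) = dps_eval c (vector [s, 0])"
proof -
  obtain r c1 where r: "r > 0" "ball t0 r \<subseteq> I"
    and hs: "\<And>h. \<bar>h\<bar> < r \<Longrightarrow> ((\<lambda>n. (h^n) *\<^sub>R c1 n) has_sum \<gamma> (t0 + h)) UNIV"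
    using assms unfolding analytic1_on_def by blast
  define c where "c = (\<lambda>(i::nat,j::nat). if j = 0 then c1 i else 0)"
  have inj0: "inj (\<lambda>i::nat. (i, 0::nat))" by (auto simp: inj_def)
  have "dps_abs_conv c r"
    unfolding dps_abs_conv_def
  proof (intro allI impI)
    fix p q :: real assume pq: "0 \<le> p" "0 \<le> q" "p^2 + q^2 < r^2"
    then have "\<bar>p\<bar> < r"
      using r by (smt (verit) power_mono zero_le_power2)
    then have "(\<lambda>n. norm ((p^n) *\<^sub>R c1 n)) summable_on UNIV"
      using hs summable_on_norm_cart summable_on_def by blast
    then have "(\<lambda>n. p^n * norm (c1 n)) summable_on UNIV" using pq by simp
    then have "(\<lambda>(i,j). p^i * q^j * norm (c (i,j))) summable_on range (\<lambda>i. (i, 0))"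
      by (subst summable_on_reindex[OF inj0]) (simp add: o_def c_def)
    then show "(\<lambda>(i,j). p^i * q^j * norm (c (i,j))) summable_on UNIV"
      by (rule summable_on_cong_neutral[THEN iffD1, rotated -1]) (auto simp: c_def)
  qed
  moreover have "\<gamma> (t0 + s) = dps_eval c (vector [s, 0])" if "\<bar>s\<bar> < r" for s
  proof -
    have "dps_eval c (vector [s, 0]) = infsum (\<lambda>(i,j). (s^i * 0^j) *\<^sub>R c (i,j)) (range (\<lambda>i. (i, 0)))"
      unfolding dps_eval_def by (rule infsum_cong_neutral) (auto simp: c_def)
    also have "\<dots> = infsum (\<lambda>n. (s^n) *\<^sub>R c1 n) UNIV"
      by (subst infsum_reindex[OF inj0]) (simp add: o_def c_def)
    also have "\<dots> = \<gamma> (t0 + s)" using hs[OF that] by (simp add: infsumI)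
    finally show ?thesis by simp
  qed
  ultimately show ?thesis using r that by blast
qed

lemma vector_2_eq_scaleR_axis: "vector [s, 0] = s *\<^sub>R (axis 1 1 :: real^2)"
  by (simp add: vec_eq_iff forall_2 axis_def)

lemma local_dps_curve_has_vector_derivative:
  fixes \<gamma> :: "real \<Rightarrow> real^2"
  assumes c: "dps_abs_conv c r" and \<gamma>: "\<And>s. \<bar>s\<bar> < r \<Longrightarrow> \<gamma> (t0 + s) = dps_eval c (vector [s, 0])"
    and t: "\<bar>t - t0\<bar> < r"
  shows "(\<gamma> has_vector_derivative dps_eval (dps_deriv1 c) (vector [t - t0, 0])) (at t)"
proof -
  define e :: "real^2" where "e = axis 1 1"
  have "((\<lambda>t. (t - t0) *\<^sub>R e) has_derivative (\<lambda>s. s *\<^sub>R e)) (at t)"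
    by (auto intro!: derivative_eq_intros)
  moreover have "norm ((t - t0) *\<^sub>R e) < r" using t by (simp add: e_def)
  note has_derivative_dps_eval[OF c this]
  ultimately have "((\<lambda>t. dps_eval c ((t - t0) *\<^sub>R e)) has_derivative
      (\<lambda>s. (s *\<^sub>R e)$1 *\<^sub>R dps_eval (dps_deriv1 c) ((t - t0) *\<^sub>R e)
          + (s *\<^sub>R e)$2 *\<^sub>R dps_eval (dps_deriv2 c) ((t - t0) *\<^sub>R e))) (at t)"
    by (rule has_derivative_compose)
  then have "((\<lambda>t. dps_eval c (vector [t - t0, 0])) has_vector_derivative
      dps_eval (dps_deriv1 c) (vector [t - t0, 0])) (at t)"
    by (simp add: has_vector_derivative_def vector_2_eq_scaleR_axis e_def axis_def)
  then show ?thesis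
  proof (rule has_vector_derivative_transform_within_open[where S = "ball t0 r"])
    show "t \<in> ball t0 r" using t by (simp add: dist_real_def abs_minus_commute)
    show "dps_eval c (vector [y - t0, 0]) = \<gamma> y" if "y \<in> ball t0 r" for y
      using that \<gamma>[of "y - t0"] by (simp add: dist_real_def abs_minus_commute)
  qed simp
qed

lemma analytic1_on_continuous_on:
  fixes \<gamma> :: "real \<Rightarrow> real^2"
  assumes "analytic1_on I \<gamma>" "open I"
  shows "continuous_on I \<gamma>" "continuous_on I (\<lambda>t. vector_derivative \<gamma> (at t))"
proof -
  have "isCont \<gamma> t0 \<and> isCont (\<lambda>t. vector_derivative \<gamma> (at t)) t0" if t0: "t0 \<in> I" for t0
  proof -
    obtain r c where r: "r > 0" "ball t0 r \<subseteq> I" "dps_abs_conv c r"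
      and \<gamma>: "\<And>s. \<bar>s\<bar> < r \<Longrightarrow> \<gamma> (t0 + s) = dps_eval c (vector [s, 0])"
      by (rule analytic1_on_local_dps[OF assms(1) t0]) blast
    have "\<forall>\<^sub>F t in nhds t0. t \<in> ball t0 r"
      using r(1) by (intro eventually_nhds_in_open) auto
    then have ev: "\<forall>\<^sub>F t in nhds t0. vector_derivative \<gamma> (at t) = dps_eval (dps_deriv1 c) (vector [t - t0, 0])"
    proof eventually_elim
      case (elim t)
      then have "\<bar>t - t0\<bar> < r" by (simp add: dist_real_def abs_minus_commute)
      then show ?case by (intro vector_derivative_at local_dps_curve_has_vector_derivative[OF r(3) \<gamma>])
    qed
    moreover have "isCont (\<lambda>t. dps_eval (dps_deriv1 c) (vector [t - t0, 0])) t0"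
    proof -
      have "isCont (\<lambda>t. (t - t0) *\<^sub>R (axis 1 1 :: real^2)) t0" by (intro continuous_intros)
      moreover have "isCont (dps_eval (dps_deriv1 c)) ((t0 - t0) *\<^sub>R axis 1 1)"
        using has_derivative_continuous[OF has_derivative_dps_eval[OF dps_abs_conv_deriv1[OF r(3)], of 0]] r(1)
        by simp
      ultimately show ?thesis unfolding vector_2_eq_scaleR_axis by (rule isCont_o2)
    qed
    moreover have "isCont \<gamma> t0"
      using local_dps_curve_has_vector_derivative[OF r(3) \<gamma>, of t0] r(1)
      by (auto intro: has_vector_derivative_continuous)
    ultimately show ?thesis using isCont_cong[OF ev] by simp
  qed
  then show "continuous_on I \<gamma>" "continuous_on I (\<lambda>t. vector_derivative \<gamma> (at t))"
    using assms(2) by (simp_all add: continuous_on_eq_continuous_at)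
qed

section \<open>Normal line congruences\<close>

lemma has_derivative_unique_on_open:
  assumes "(f has_derivative F) (at u)" "(g has_derivative G) (at u)" "open U" "u \<in> U"
    "\<And>v. v \<in> U \<Longrightarrow> f v = g v"
  shows "F = G"
proof -
  have "(g has_derivative F) (at u)"
    by (rule has_derivative_transform_within_open[OF assms(1) assms(3,4)]) (use assms(5) in auto)
  then show ?thesis using assms(2) by (rule has_derivative_unique)
qed

lemma unit_field_inner_partial_deriv:
  fixes \<xi> :: "real^2 \<Rightarrow> real^3"
  assumes "open U" "v \<in> U" "\<xi> differentiable (at v)" "\<And>w. w \<in> U \<Longrightarrow> norm (\<xi> w) = 1"
  shows "\<xi> v \<bullet> partial_deriv \<xi> j v = 0"
proof -
  let ?D = "frechet_derivative \<xi> (at v)"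
  have "(\<xi> has_derivative ?D) (at v)" using assms(3) frechet_derivative_works by blast
  from has_derivative_inner[OF this this]
  have d: "((\<lambda>w. \<xi> w \<bullet> \<xi> w) has_derivative (\<lambda>h. \<xi> v \<bullet> ?D h + ?D h \<bullet> \<xi> v)) (at v)" .
  have "\<xi> w \<bullet> \<xi> w = 1" if "w \<in> U" for w
    using assms(4)[OF that] by (simp add: power2_norm_eq_inner[symmetric])
  then have "(\<lambda>h. \<xi> v \<bullet> ?D h + ?D h \<bullet> \<xi> v) = (\<lambda>h. 0)"
    by (rule has_derivative_unique_on_open[OF d has_derivative_const assms(1,2)])
  from fun_cong[OF this, of "axis j 1"] show ?thesis by (simp add: partial_deriv_def inner_commute)
qed

lemma smooth_on_imp_C2:
  fixes lam :: "real^2 \<Rightarrow> real"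
  assumes "smooth_on U lam"
  shows "\<And>v. v \<in> U \<Longrightarrow> lam differentiable (at v)"
    and "\<And>v k. v \<in> U \<Longrightarrow> partial_deriv lam k differentiable (at v)"
    and "\<And>k l. continuous_on U (partial_deriv (partial_deriv lam k) l)"
proof -
  have C2: "Ck_on 2 U lam" using assms unfolding smooth_on_def by blast
  have pd: "partial_deriv g k = (\<lambda>u. frechet_derivative g (at u) (axis k 1))" for g :: "real^2 \<Rightarrow> real" and k
    by (simp add: partial_deriv_def fun_eq_iff)
  show "\<And>v. v \<in> U \<Longrightarrow> lam differentiable (at v)"
    and "\<And>v k. v \<in> U \<Longrightarrow> partial_deriv lam k differentiable (at v)"
    and "\<And>k l. continuous_on U (partial_deriv (partial_deriv lam k) l)"
    using C2 unfolding numeral_2_eq_2 pd by simp_all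
qed

lemma smooth_on_continuous_on: "smooth_on U f \<Longrightarrow> continuous_on U f"
  unfolding smooth_on_def by (metis Ck_on.simps(1))

lemma normal_congruence_inner_partial_deriv:
  fixes x \<xi> :: "real^2 \<Rightarrow> real^3" and lam :: "real^2 \<Rightarrow> real"
  assumes "open U" and v: "v \<in> U"
    and d\<xi>: "\<xi> differentiable (at v)" and n\<xi>: "\<And>w. w \<in> U \<Longrightarrow> norm (\<xi> w) = 1"
    and dx: "x differentiable (at v)" and dlam: "lam differentiable (at v)"
    and normal: "\<And>j. \<xi> v \<bullet> column j (jacobian (\<lambda>v. x v + lam v *\<^sub>R \<xi> v) (at v)) = 0"
  shows "\<xi> v \<bullet> partial_deriv x j v = - partial_deriv lam j v"
proof -
  have "((\<lambda>v. x v + lam v *\<^sub>R \<xi> v) has_derivative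
      (\<lambda>h. frechet_derivative x (at v) h + (lam v *\<^sub>R frechet_derivative \<xi> (at v) h
           + frechet_derivative lam (at v) h *\<^sub>R \<xi> v))) (at v)"
    using dx dlam d\<xi> by (intro has_derivative_add has_derivative_scaleR) (auto simp: frechet_derivative_works[symmetric])
  then have "partial_deriv (\<lambda>v. x v + lam v *\<^sub>R \<xi> v) j v
      = partial_deriv x j v + partial_deriv lam j v *\<^sub>R \<xi> v + lam v *\<^sub>R partial_deriv \<xi> j v"
    by (simp add: partial_deriv_def frechet_derivative_at[symmetric])
  then have "0 = \<xi> v \<bullet> partial_deriv x j v + partial_deriv lam j v * (\<xi> v \<bullet> \<xi> v) + lam v * (\<xi> v \<bullet> partial_deriv \<xi> j v)"
    using normal[of j] by (simp add: column_jacobian inner_add_right)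
  also have "\<dots> = \<xi> v \<bullet> partial_deriv x j v + partial_deriv lam j v"
    using unit_field_inner_partial_deriv[OF assms(1) v d\<xi> n\<xi>] n\<xi>[OF v]
    by (simp add: power2_norm_eq_inner[symmetric])
  finally show ?thesis by linarith
qed

lemma normal_congruence_symmetric:
  fixes x \<xi> :: "real^2 \<Rightarrow> real^3"
  assumes U: "open U" "u \<in> U" and x: "analytic2_on U x" and \<xi>: "analytic2_on U \<xi>"
    and n\<xi>: "\<And>v. v \<in> U \<Longrightarrow> norm (\<xi> v) = 1" and nc: "normal_congruence U x \<xi>"
  shows "partial_deriv \<xi> i u \<bullet> partial_deriv x j u = partial_deriv \<xi> j u \<bullet> partial_deriv x i u"
proof -
  obtain lam where lam: "smooth_on U lam"
    and normal: "\<And>v j. v \<in> U \<Longrightarrow> \<xi> v \<bullet> column j (jacobian (\<lambda>v. x v + lam v *\<^sub>R \<xi> v) (at v)) = 0"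
    using nc unfolding normal_congruence_def by blast
  note d\<xi> = analytic2_on_differentiable[OF \<xi>]
  note dx1 = analytic2_on_differentiable[OF analytic2_on_partial_deriv[OF x]]
  note C2 = smooth_on_imp_C2[OF lam]
  have second: "partial_deriv \<xi> i u \<bullet> partial_deriv x j u + \<xi> u \<bullet> partial_deriv (partial_deriv x j) i u
      = - partial_deriv (partial_deriv lam j) i u" for i j
  proof -
    let ?D = "\<lambda>f. frechet_derivative f (at u)"
    have d1: "((\<lambda>v. \<xi> v \<bullet> partial_deriv x j v) has_derivative
        (\<lambda>h. \<xi> u \<bullet> ?D (partial_deriv x j) h + ?D \<xi> h \<bullet> partial_deriv x j u)) (at u)"
      using d\<xi>[OF U(2)] dx1[OF U(2)]
      by (intro has_derivative_inner) (auto simp: frechet_derivative_works[symmetric])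
    have d2: "((\<lambda>v. - partial_deriv lam j v) has_derivative (\<lambda>h. - ?D (partial_deriv lam j) h)) (at u)"
      using C2(2)[OF U(2)] by (intro has_derivative_minus) (auto simp: frechet_derivative_works[symmetric])
    have "\<xi> v \<bullet> partial_deriv x j v = - partial_deriv lam j v" if "v \<in> U" for v
      using normal_congruence_inner_partial_deriv[OF U(1) that d\<xi>[OF that] n\<xi>
          analytic2_on_differentiable[OF x that] C2(1)[OF that] normal[OF that]] .
    then have "(\<lambda>h. \<xi> u \<bullet> ?D (partial_deriv x j) h + ?D \<xi> h \<bullet> partial_deriv x j u)
        = (\<lambda>h. - ?D (partial_deriv lam j) h)"
      by (rule has_derivative_unique_on_open[OF d1 d2 U])
    from fun_cong[OF this, of "axis i 1"] show ?thesis
      by (simp add: partial_deriv_def[of \<xi>] partial_deriv_def[of "partial_deriv x j"]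
          partial_deriv_def[of "partial_deriv lam j"] inner_commute)
  qed
  have "partial_deriv (partial_deriv lam j) i u = partial_deriv (partial_deriv lam i) j u"
    by (rule partial_deriv_commute_C2[OF U C2])
  moreover have "\<xi> u \<bullet> partial_deriv (partial_deriv x j) i u = \<xi> u \<bullet> partial_deriv (partial_deriv x i) j u"
    by (simp only: analytic2_on_partial_deriv_commute[OF x U(2)])
  ultimately show ?thesis using second[of i j] second[of j i] by linarith
qed

lemma in_span_pairE:
  fixes a b v :: "'a::real_vector"
  assumes "v \<in> span {a, b}"
  obtains s t where "v = s *\<^sub>R a + t *\<^sub>R b"
proof -
  obtain s where "v - s *\<^sub>R a \<in> span {b}" using assms by (auto simp: span_breakdown_eq)
  then obtain t where "v - s *\<^sub>R a = t *\<^sub>R b" by (auto simp: span_singleton)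
  then show ?thesis using that[of s t] by (simp add: algebra_simps)
qed

lemma columns_2: "columns (A :: real^2^'m) = {column 1 A, column 2 A}"
  unfolding columns_def using exhaust_2 by auto metis

lemma matrix_mult_2_nth: "(A ** (B :: real^'k^2)) $ i $ k = A$i$1 * B$1$k + A$i$2 * B$2$k"
  by (simp add: matrix_matrix_mult_def sum_2)

lemma tangent_moving_basis_mult_cancel:
  fixes A B :: "real^'k^2"
  assumes "tangent_moving_basis U \<xi> \<Omega>" "u \<in> U" "\<Omega> u ** A = \<Omega> u ** B"
  shows "A = B"
proof -
  have ind: "\<And>a b. a *\<^sub>R column 1 (\<Omega> u) + b *\<^sub>R column 2 (\<Omega> u) = 0 \<Longrightarrow> a = 0 \<and> b = 0"
    using assms(1,2) unfolding tangent_moving_basis_def by blast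
  have "(A$1$k - B$1$k) *\<^sub>R column 1 (\<Omega> u) + (A$2$k - B$2$k) *\<^sub>R column 2 (\<Omega> u) = 0" for k
    using assms(3) by (simp add: vec_eq_iff matrix_mult_2_nth column_def algebra_simps)
  then have "A$1$k = B$1$k \<and> A$2$k = B$2$k" for k using ind by force
  then show ?thesis by (simp add: vec_eq_iff forall_2)
qed

lemma tangent_moving_basis_factor:
  assumes "tangent_moving_basis U \<xi> \<Omega>" "u \<in> U"
  obtains D where "jacobian \<xi> (at u) = \<Omega> u ** transpose D"
proof -
  let ?J = "jacobian \<xi> (at u)" and ?O = "\<Omega> u"
  have "\<exists>s t. column j ?J = s *\<^sub>R column 1 ?O + t *\<^sub>R column 2 ?O" for j
    using assms unfolding tangent_moving_basis_def columns_2 by (metis in_span_pairE)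
  then obtain s t where st: "\<And>j. column j ?J = s j *\<^sub>R column 1 ?O + t j *\<^sub>R column 2 ?O"
    by metis
  have "?J $ i $ j = (?O ** transpose (\<chi> j k. if k = 1 then s j else t j)) $ i $ j" for i j
    using arg_cong[OF st[of j], of "\<lambda>v. v $ i"]
    by (simp add: column_def matrix_mult_2_nth transpose_def mult.commute)
  then show ?thesis by (intro that[of "\<chi> j k. if k = 1 then s j else t j"]) (simp add: vec_eq_iff)
qed

lemma jacobian_eq_Omega_Delta:
  assumes "tangent_moving_basis U \<xi> \<Omega>" "u \<in> U"
  shows "jacobian \<xi> (at u) = \<Omega> u ** transpose (Delta \<xi> \<Omega> u)"
proof -
  obtain D where D: "jacobian \<xi> (at u) = \<Omega> u ** transpose D"
    using tangent_moving_basis_factor[OF assms] by blast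
  have "Delta \<xi> \<Omega> u = D"
    unfolding Delta_def
  proof (rule the_equality)
    show "D' = D" if "jacobian \<xi> (at u) = \<Omega> u ** transpose D'" for D'
      using tangent_moving_basis_mult_cancel[OF assms, of "transpose D'" "transpose D"] that D
      by (metis transpose_transpose)
  qed (rule D)
  then show ?thesis using D by simp
qed

lemma Delta_second_ff_symmetric:
  assumes "tangent_moving_basis U \<xi> \<Omega>" "u \<in> U"
    and sym: "partial_deriv \<xi> 1 u \<bullet> partial_deriv x 2 u = partial_deriv \<xi> 2 u \<bullet> partial_deriv x 1 u"
  shows "(Delta \<xi> \<Omega> u ** second_ff x \<Omega> u) $ 1 $ 2 = (Delta \<xi> \<Omega> u ** second_ff x \<Omega> u) $ 2 $ 1"
proof -
  let ?J = "jacobian \<xi> (at u)" and ?X = "jacobian x (at u)"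
  have "transpose ?J = Delta \<xi> \<Omega> u ** transpose (\<Omega> u)"
    by (simp add: jacobian_eq_Omega_Delta[OF assms(1,2)] matrix_transpose_mul)
  moreover have "A ** (- B) = - (A ** B)" for A B :: "real^2^2"
    by (simp add: matrix_matrix_mult_def vec_eq_iff sum_negf)
  ultimately have "Delta \<xi> \<Omega> u ** second_ff x \<Omega> u = - (transpose ?J ** ?X)"
    by (simp add: second_ff_def matrix_mul_assoc)
  moreover have "(transpose ?J ** ?X) $ i $ j = partial_deriv \<xi> i u \<bullet> partial_deriv x j u" for i j
    by (simp add: matrix_matrix_mult_def transpose_def inner_vec_def column_jacobian[symmetric] column_def)
  ultimately show ?thesis using sym by simp
qed

definition principal_form :: "(R2 \<Rightarrow> R3) \<Rightarrow> (R2 \<Rightarrow> R3) \<Rightarrow> (R2 \<Rightarrow> real^2^3) \<Rightarrow> R2 \<Rightarrow> R2 \<Rightarrow> real" where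
  "principal_form x \<xi> \<Omega> u g = (let D = Delta \<xi> \<Omega> u in
     g \<bullet> ((D ** Pmat ** transpose (adj2 (second_ff x \<Omega> u)) ** D ** first_ff \<Omega> u ** transpose D) *v g))"

definition developable_form :: "(R2 \<Rightarrow> R3) \<Rightarrow> (R2 \<Rightarrow> R3) \<Rightarrow> (R2 \<Rightarrow> real^2^3) \<Rightarrow> R2 \<Rightarrow> R2 \<Rightarrow> real" where
  "developable_form x \<xi> \<Omega> u g = (let D = Delta \<xi> \<Omega> u in
     g \<bullet> ((Pmat ** adj2 (second_ff x \<Omega> u) ** first_ff \<Omega> u ** transpose D) *v g))"

lemma Pmat_adj2_conj:
  fixes D II :: "real^2^2"
  shows "D ** Pmat ** transpose (adj2 II) ** D
    = det D *\<^sub>R (Pmat ** adj2 II) + ((D ** II) $ 2 $ 1 - (D ** II) $ 1 $ 2) *\<^sub>R D"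
  unfolding vec_eq_iff forall_2
  by (simp add: matrix_mult_2_nth adj2_def Pmat_def transpose_def det_2 algebra_simps)

lemma principal_form_eq_det_Delta_developable_form:
  assumes "(Delta \<xi> \<Omega> u ** second_ff x \<Omega> u) $ 1 $ 2 = (Delta \<xi> \<Omega> u ** second_ff x \<Omega> u) $ 2 $ 1"
  shows "principal_form x \<xi> \<Omega> u g = det (Delta \<xi> \<Omega> u) * developable_form x \<xi> \<Omega> u g"
proof -
  let ?D = "Delta \<xi> \<Omega> u"
  have "?D ** Pmat ** transpose (adj2 (second_ff x \<Omega> u)) ** ?D ** first_ff \<Omega> u ** transpose ?D
      = det ?D *\<^sub>R (Pmat ** adj2 (second_ff x \<Omega> u) ** first_ff \<Omega> u ** transpose ?D)"
    unfolding Pmat_adj2_conj assms by (simp add: scalar_matrix_assoc)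
  then show ?thesis
    unfolding principal_form_def developable_form_def Let_def
    by (simp add: scaleR_matrix_vector_assoc[symmetric])
qed

lemma normal_congruence_principal_form_eq:
  fixes x \<xi> :: "real^2 \<Rightarrow> real^3"
  assumes "open U" "analytic2_on U x" "analytic2_on U \<xi>" "\<And>v. v \<in> U \<Longrightarrow> norm (\<xi> v) = 1"
    and "normal_congruence U x \<xi>" "tangent_moving_basis U \<xi> \<Omega>" "u \<in> U"
  shows "principal_form x \<xi> \<Omega> u g = det (Delta \<xi> \<Omega> u) * developable_form x \<xi> \<Omega> u g"
  using assms
  by (intro principal_form_eq_det_Delta_developable_form Delta_second_ff_symmetric normal_congruence_symmetric)

lemma developable_form_eq:
  assumes "tangent_moving_basis U \<xi> \<Omega>" "u \<in> U"
  shows "developable_form x \<xi> \<Omega> u g =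
    g \<bullet> ((Pmat ** adj2 (- (transpose (\<Omega> u) ** jacobian x (at u))) ** (transpose (\<Omega> u) ** jacobian \<xi> (at u))) *v g)"
  unfolding developable_form_def Let_def second_ff_def first_ff_def jacobian_eq_Omega_Delta[OF assms]
  by (simp add: matrix_mul_assoc)

lemma continuous_on_matrix_mult [continuous_intros]:
  fixes f :: "'a::topological_space \<Rightarrow> real^'n^'m" and g :: "'a \<Rightarrow> real^'p^'n"
  shows "continuous_on S f \<Longrightarrow> continuous_on S g \<Longrightarrow> continuous_on S (\<lambda>x. f x ** g x)"
  unfolding matrix_matrix_mult_def by (intro continuous_intros)

lemma continuous_on_matrix_vector_mult [continuous_intros]:
  fixes f :: "'a::topological_space \<Rightarrow> real^'n^'m" and g :: "'a \<Rightarrow> real^'n"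
  shows "continuous_on S f \<Longrightarrow> continuous_on S g \<Longrightarrow> continuous_on S (\<lambda>x. f x *v g x)"
  unfolding matrix_vector_mult_def by (intro continuous_intros)

lemma continuous_on_transpose [continuous_intros]:
  fixes f :: "'a::topological_space \<Rightarrow> real^'n^'m"
  shows "continuous_on S f \<Longrightarrow> continuous_on S (\<lambda>x. transpose (f x))"
  unfolding transpose_def by (intro continuous_intros)

lemma continuous_on_adj2 [continuous_intros]:
  fixes f :: "'a::topological_space \<Rightarrow> real^2^2"
  assumes "continuous_on S f"
  shows "continuous_on S (\<lambda>x. adj2 (f x))"
  unfolding adj2_def
proof (intro continuous_on_vec_lambda)
  fix i j :: 2
  show "continuous_on S (\<lambda>x. if i = 1 \<and> j = 1 then f x $ 2 $ 2 else if i = 1 \<and> j = 2 then - f x $ 1 $ 2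
                 else if i = 2 \<and> j = 1 then - f x $ 2 $ 1 else f x $ 1 $ 1)"
    using exhaust_2[of i] exhaust_2[of j] by (elim disjE) (simp_all add: assms continuous_intros)
qed

lemma continuous_on_developable_form_along_curve:
  assumes U: "open U" and x: "analytic2_on U x" and \<xi>: "analytic2_on U \<xi>"
    and \<Omega>: "tangent_moving_basis U \<xi> \<Omega>"
    and I: "open I" and \<gamma>: "analytic1_on I \<gamma>" "\<gamma> ` I \<subseteq> U"
  shows "continuous_on I (\<lambda>t. developable_form x \<xi> \<Omega> (\<gamma> t) (vector_derivative \<gamma> (at t)))"
proof -
  note \<gamma>_cont = analytic1_on_continuous_on[OF \<gamma>(1) I]
  have "continuous_on I (\<lambda>t. \<Omega> (\<gamma> t))"
    using \<Omega> unfolding tangent_moving_basis_def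
    by (intro continuous_on_compose2[OF smooth_on_continuous_on \<gamma>_cont(1) \<gamma>(2)]) blast
  moreover have "continuous_on I (\<lambda>t. jacobian x (at (\<gamma> t)))" "continuous_on I (\<lambda>t. jacobian \<xi> (at (\<gamma> t)))"
    by (rule continuous_on_compose2[OF analytic2_on_continuous_on_jacobian[OF _ U] \<gamma>_cont(1) \<gamma>(2)], fact)+
  ultimately have "continuous_on I (\<lambda>t. vector_derivative \<gamma> (at t) \<bullet> ((Pmat ** adj2 (- (transpose (\<Omega> (\<gamma> t))
      ** jacobian x (at (\<gamma> t)))) ** (transpose (\<Omega> (\<gamma> t)) ** jacobian \<xi> (at (\<gamma> t)))) *v vector_derivative \<gamma> (at t)))"
    using \<gamma>_cont(2) by (intro continuous_intros)
  then show ?thesis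
    using \<gamma>(2) by (subst continuous_on_cong[OF refl developable_form_eq[OF \<Omega>]]) auto
qed

lemma det_eq_0_kernelE:
  fixes A :: "real^'n^'n"
  assumes "det A = 0"
  obtains w where "w \<noteq> 0" "A *v w = 0"
proof -
  have "\<not> invertible A" using assms invertible_det_nz by blast
  then have "\<not> (\<forall>w. A *v w = 0 \<longrightarrow> w = 0)"
    by (simp add: invertible_left_inverse matrix_left_invertible_ker[symmetric])
  then show ?thesis using that by blast
qed

lemma singular_set_iff_kernel:
  fixes \<xi> :: "real^2 \<Rightarrow> real^3"
  assumes "u \<in> U" "\<xi> differentiable (at u)"
  shows "u \<in> singular_set U \<xi> \<longleftrightarrow> (\<exists>w. w \<noteq> 0 \<and> jacobian \<xi> (at u) *v w = 0)"
proof -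
  have "frechet_derivative \<xi> (at u) = (*v) (jacobian \<xi> (at u))"
    using assms(2) jacobian_works frechet_derivative_at by metis
  moreover have "inj ((*v) A) \<longleftrightarrow> (\<forall>w. A *v w = 0 \<longrightarrow> w = 0)" for A :: "real^2^3"
    by (metis inj_matrix_vector_mult matrix_left_invertible_injective matrix_left_invertible_ker)
  ultimately show ?thesis using assms(1) by (auto simp: singular_set_def)
qed

definition gram_det :: "real^2^3 \<Rightarrow> real" where
  "gram_det A = det (transpose A ** A)"

lemma gram_det_eq_0_iff:
  fixes A :: "real^2^3"
  shows "gram_det A = 0 \<longleftrightarrow> (\<exists>w. w \<noteq> 0 \<and> A *v w = 0)"
proof
  assume "gram_det A = 0"
  then obtain w where w: "w \<noteq> 0" "(transpose A ** A) *v w = 0"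
    unfolding gram_det_def by (rule det_eq_0_kernelE)
  then have "(A *v w) \<bullet> (A *v w) = 0"
    by (metis dot_lmul_matrix inner_zero_right matrix_vector_mul_assoc vector_transpose_matrix)
  then show "\<exists>w. w \<noteq> 0 \<and> A *v w = 0" using w by auto
next
  assume "\<exists>w. w \<noteq> 0 \<and> A *v w = 0"
  then obtain w where "w \<noteq> 0" "(transpose A ** A) *v w = 0"
    by (metis matrix_vector_mul_assoc matrix_vector_mult_0_right)
  then have "\<not> (\<forall>w. (transpose A ** A) *v w = 0 \<longrightarrow> w = 0)" by blast
  then have "\<not> invertible (transpose A ** A)"
    by (simp add: invertible_left_inverse matrix_left_invertible_ker[symmetric])
  then show "gram_det A = 0" unfolding gram_det_def using invertible_det_nz by blast
qed

lemma singular_set_iff_gram_det_eq_0: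
  fixes \<xi> :: "real^2 \<Rightarrow> real^3"
  assumes "u \<in> U" "\<xi> differentiable (at u)"
  shows "u \<in> singular_set U \<xi> \<longleftrightarrow> gram_det (jacobian \<xi> (at u)) = 0"
  by (simp add: singular_set_iff_kernel[OF assms] gram_det_eq_0_iff)

lemma det_Delta_eq_0_imp_singular:
  assumes "tangent_moving_basis U \<xi> \<Omega>" "u \<in> U" "\<xi> differentiable (at u)"
    and "det (Delta \<xi> \<Omega> u) = 0"
  shows "u \<in> singular_set U \<xi>"
proof -
  obtain w where w: "w \<noteq> 0" "transpose (Delta \<xi> \<Omega> u) *v w = 0"
    using assms(4) det_eq_0_kernelE[of "transpose (Delta \<xi> \<Omega> u)"] by auto
  then have "jacobian \<xi> (at u) *v w = 0"
    by (simp add: jacobian_eq_Omega_Delta[OF assms(1,2)] matrix_vector_mul_assoc[symmetric])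
  then show ?thesis using w(1) singular_set_iff_kernel[OF assms(2,3)] by blast
qed

lemma developable_form_eq_0_off_singular_set:
  fixes x \<xi> :: "real^2 \<Rightarrow> real^3"
  assumes "open U" "analytic2_on U x" "analytic2_on U \<xi>" "\<And>v. v \<in> U \<Longrightarrow> norm (\<xi> v) = 1"
    and "normal_congruence U x \<xi>" "tangent_moving_basis U \<xi> \<Omega>" "u \<in> U"
    and "u \<notin> singular_set U \<xi>" "principal_form x \<xi> \<Omega> u g = 0"
  shows "developable_form x \<xi> \<Omega> u g = 0"
proof -
  have "det (Delta \<xi> \<Omega> u) \<noteq> 0"
    using det_Delta_eq_0_imp_singular[OF assms(6,7) analytic2_on_differentiable[OF assms(3,7)]] assms(8) by blast
  then show ?thesis using normal_congruence_principal_form_eq[OF assms(1-7)] assms(9) by simp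
qed

lemma gram_det_jacobian:
  "gram_det (jacobian \<xi> (at v)) =
     (\<Sum>k\<in>UNIV. partial_deriv \<xi> 1 v $ k * partial_deriv \<xi> 1 v $ k) * (\<Sum>k\<in>UNIV. partial_deriv \<xi> 2 v $ k * partial_deriv \<xi> 2 v $ k)
     - (\<Sum>k\<in>UNIV. partial_deriv \<xi> 1 v $ k * partial_deriv \<xi> 2 v $ k)^2"
  by (simp add: gram_det_def det_2 matrix_matrix_mult_def transpose_def column_jacobian[symmetric]
      column_def power2_eq_square algebra_simps)

section \<open>Holomorphic extension along analytic curves\<close>

definition dps_complex :: "(nat \<times> nat \<Rightarrow> real) \<Rightarrow> complex \<Rightarrow> complex \<Rightarrow> complex" where
  "dps_complex a w1 w2 = infsum (\<lambda>(i,j). of_real (a (i,j)) * w1^i * w2^j) UNIV"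

lemma holomorphic_on_dps_complex:
  fixes a :: "nat \<times> nat \<Rightarrow> real"
  assumes a: "dps_abs_conv a r"
    and hol: "g1 holomorphic_on ball z0 \<rho>" "g2 holomorphic_on ball z0 \<rho>"
    and cont: "continuous_on (cball z0 \<rho>) g1" "continuous_on (cball z0 \<rho>) g2"
    and bound: "\<And>z. z \<in> cball z0 \<rho> \<Longrightarrow> norm (g1 z) \<le> p \<and> norm (g2 z) \<le> q"
    and pq: "0 \<le> p" "0 \<le> q" "p^2 + q^2 < r^2"
  shows "(\<lambda>z. dps_complex a (g1 z) (g2 z)) holomorphic_on ball z0 \<rho>"
proof -
  define T where "T = (\<lambda>(i,j) z. complex_of_real (a (i,j)) * (g1 z)^i * (g2 z)^j)"
  have bound': "norm (T k z) \<le> (case k of (i,j) \<Rightarrow> p^i * q^j * norm (a (i,j)))" if "z \<in> cball z0 \<rho>" for k z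
  proof -
    obtain i j where k: "k = (i,j)" by fastforce
    have "norm (T k z) = norm (a (i,j)) * norm (g1 z)^i * norm (g2 z)^j"
      by (simp add: T_def k norm_mult norm_power)
    also have "\<dots> \<le> norm (a (i,j)) * p^i * q^j"
      using bound[OF that] pq by (intro mult_mono power_mono) auto
    finally show ?thesis by (simp add: k mult_ac)
  qed
  have lim: "uniform_limit (cball z0 \<rho>) (\<lambda>N z. sum (\<lambda>k. T k z) (square_indices N))
      (\<lambda>z. infsum (\<lambda>k. T k z) UNIV) sequentially"
    by (rule uniform_limit_square_partial_sums[OF bound' dps_abs_conv_summable[OF a pq]])
  have "\<forall>\<^sub>F N in sequentially. continuous_on (cball z0 \<rho>) (\<lambda>z. sum (\<lambda>k. T k z) (square_indices N))
      \<and> (\<lambda>z. sum (\<lambda>k. T k z) (square_indices N)) holomorphic_on ball z0 \<rho>"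
    unfolding T_def case_prod_unfold by (intro always_eventually allI conjI continuous_intros holomorphic_intros cont hol)
  then have "(\<lambda>z. infsum (\<lambda>k. T k z) UNIV) holomorphic_on ball z0 \<rho>"
    using holomorphic_uniform_limit[OF _ lim] by auto
  then show ?thesis by (simp add: dps_complex_def T_def case_prod_unfold)
qed

lemma dps_complex_of_real:
  fixes a :: "nat \<times> nat \<Rightarrow> real"
  assumes "dps_abs_conv a r" "norm h < r"
  shows "dps_complex a (of_real (h$1)) (of_real (h$2)) = of_real (dps_eval a h)"
proof -
  have "((\<lambda>k. of_real ((\<lambda>(i,j). ((h$1)^i * (h$2)^j) *\<^sub>R a (i,j)) k) :: complex)
      has_sum of_real (dps_eval a h)) UNIV"
    by (rule has_sum_of_real_iff[THEN iffD2, OF has_sum_dps_eval[OF assms]])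
  then show ?thesis
    unfolding dps_complex_def by (intro infsumI) (simp add: case_prod_unfold mult_ac)
qed

lemma dps_abs_conv_component:
  fixes c :: "nat \<times> nat \<Rightarrow> real^'n"
  assumes "dps_abs_conv c r"
  shows "dps_abs_conv (\<lambda>k. c k $ m) r"
  unfolding dps_abs_conv_def
proof (intro allI impI)
  fix p q :: real assume pq: "0 \<le> p" "0 \<le> q" "p^2 + q^2 < r^2"
  have "p^i * q^j * norm (c (i,j) $ m) \<le> p^i * q^j * norm (c (i,j))" for i j
    using pq component_le_norm_cart[of "c (i,j)" m] by (intro mult_left_mono) auto
  then show "(\<lambda>(i,j). p^i * q^j * norm (c (i,j) $ m)) summable_on UNIV"
    using pq by (intro summable_on_comparison_test[OF dps_abs_conv_summable[OF assms pq]]) auto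
qed

lemma dps_eval_component:
  fixes c :: "nat \<times> nat \<Rightarrow> real^'n"
  assumes "dps_abs_conv c r" "norm h < r"
  shows "dps_eval c h $ m = dps_eval (\<lambda>k. c k $ m) h"
proof -
  have "((\<lambda>k. ((\<lambda>(i,j). ((h$1)^i * (h$2)^j) *\<^sub>R c (i,j)) k) $ m) has_sum (dps_eval c h $ m)) UNIV"
    by (rule has_sum_bounded_linear[OF bounded_linear_vec_nth has_sum_dps_eval[OF assms]])
  then show ?thesis
    unfolding dps_eval_def by (intro infsumI[symmetric]) (simp add: case_prod_unfold)
qed

text \<open>On an open set this is real analyticity, in the form to which the complex identity theorem applies.\<close>

definition locally_holomorphic_extendable :: "real set \<Rightarrow> (real \<Rightarrow> real) \<Rightarrow> bool" where
  "locally_holomorphic_extendable I f \<longleftrightarrow> (\<forall>t\<in>I. \<exists>\<rho>>0. ball t \<rho> \<subseteq> I \<and>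
     (\<exists>G. G holomorphic_on ball (of_real t) \<rho> \<and> (\<forall>s\<in>ball t \<rho>. G (of_real s) = of_real (f s))))"

lemma locally_holomorphic_extendable_pairE:
  assumes "locally_holomorphic_extendable I f" "locally_holomorphic_extendable I g" "t \<in> I"
  obtains \<rho> F G where "\<rho> > 0" "ball t \<rho> \<subseteq> I"
    "F holomorphic_on ball (of_real t) \<rho>" "\<And>s. s \<in> ball t \<rho> \<Longrightarrow> F (of_real s) = of_real (f s)"
    "G holomorphic_on ball (of_real t) \<rho>" "\<And>s. s \<in> ball t \<rho> \<Longrightarrow> G (of_real s) = of_real (g s)"
proof -
  obtain \<rho>1 F where "\<rho>1 > 0" "ball t \<rho>1 \<subseteq> I" "F holomorphic_on ball (of_real t) \<rho>1"
    "\<And>s. s \<in> ball t \<rho>1 \<Longrightarrow> F (of_real s) = of_real (f s)"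
    using assms(1,3) unfolding locally_holomorphic_extendable_def by blast
  moreover obtain \<rho>2 G where "\<rho>2 > 0" "G holomorphic_on ball (of_real t) \<rho>2"
    "\<And>s. s \<in> ball t \<rho>2 \<Longrightarrow> G (of_real s) = of_real (g s)"
    using assms(2,3) unfolding locally_holomorphic_extendable_def by blast
  ultimately show ?thesis
    by (intro that[of "min \<rho>1 \<rho>2" F G]) auto
qed

lemma locally_holomorphic_extendable_binop:
  assumes "locally_holomorphic_extendable I f" "locally_holomorphic_extendable I g"
    and hol: "\<And>F G S. F holomorphic_on S \<Longrightarrow> G holomorphic_on S \<Longrightarrow> (\<lambda>z. op' (F z) (G z)) holomorphic_on S"
    and real: "\<And>a b. op' (of_real a) (of_real b) = of_real (op a b)"
  shows "locally_holomorphic_extendable I (\<lambda>t. op (f t) (g t))"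
  unfolding locally_holomorphic_extendable_def
proof
  fix t assume "t \<in> I"
  with assms(1,2) obtain \<rho> F G where "\<rho> > 0" "ball t \<rho> \<subseteq> I"
    "F holomorphic_on ball (of_real t) \<rho>" "\<And>s. s \<in> ball t \<rho> \<Longrightarrow> F (of_real s) = of_real (f s)"
    "G holomorphic_on ball (of_real t) \<rho>" "\<And>s. s \<in> ball t \<rho> \<Longrightarrow> G (of_real s) = of_real (g s)"
    by (rule locally_holomorphic_extendable_pairE) blast
  then show "\<exists>\<rho>>0. ball t \<rho> \<subseteq> I \<and> (\<exists>H. H holomorphic_on ball (of_real t) \<rho> \<and>
      (\<forall>s\<in>ball t \<rho>. H (of_real s) = of_real (op (f s) (g s))))"
    by (intro exI[of _ \<rho>] conjI exI[of _ "\<lambda>z. op' (F z) (G z)"] hol) (auto simp: real)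
qed

lemma locally_holomorphic_extendable_const:
  assumes "open I"
  shows "locally_holomorphic_extendable I (\<lambda>_. c)"
  unfolding locally_holomorphic_extendable_def
proof
  fix t assume "t \<in> I"
  then obtain \<rho> where "\<rho> > 0" "ball t \<rho> \<subseteq> I" using assms open_contains_ball by blast
  then show "\<exists>\<rho>>0. ball t \<rho> \<subseteq> I \<and> (\<exists>G. G holomorphic_on ball (of_real t) \<rho> \<and>
      (\<forall>s\<in>ball t \<rho>. G (of_real s) = of_real c))"
    by (intro exI[of _ \<rho>] conjI exI[of _ "\<lambda>_. of_real c"]) auto
qed

lemma locally_holomorphic_extendable_add:
  "locally_holomorphic_extendable I f \<Longrightarrow> locally_holomorphic_extendable I g \<Longrightarrow>
   locally_holomorphic_extendable I (\<lambda>t. f t + g t)"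
  by (rule locally_holomorphic_extendable_binop[where op' = "(+)"]) (auto intro: holomorphic_intros)

lemma locally_holomorphic_extendable_diff:
  "locally_holomorphic_extendable I f \<Longrightarrow> locally_holomorphic_extendable I g \<Longrightarrow>
   locally_holomorphic_extendable I (\<lambda>t. f t - g t)"
  by (rule locally_holomorphic_extendable_binop[where op' = "(-)"]) (auto intro: holomorphic_intros)

lemma locally_holomorphic_extendable_mult:
  "locally_holomorphic_extendable I f \<Longrightarrow> locally_holomorphic_extendable I g \<Longrightarrow>
   locally_holomorphic_extendable I (\<lambda>t. f t * g t)"
  by (rule locally_holomorphic_extendable_binop[where op' = "(*)"]) (auto intro: holomorphic_intros)

lemma locally_holomorphic_extendable_sum:
  assumes "open I" "finite A" "\<And>k. k \<in> A \<Longrightarrow> locally_holomorphic_extendable I (f k)"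
  shows "locally_holomorphic_extendable I (\<lambda>t. \<Sum>k\<in>A. f k t)"
  using assms(2,3)
  by (induction A rule: finite_induct)
     (simp_all add: locally_holomorphic_extendable_const[OF assms(1)] locally_holomorphic_extendable_add)

lemma holomorphic_dps_complex_near_centreE:
  fixes a :: "nat \<times> nat \<Rightarrow> real"
  assumes a: "dps_abs_conv a r" "0 < r"
    and G: "G1 holomorphic_on ball z0 \<rho>" "G2 holomorphic_on ball z0 \<rho>" "0 < \<rho>"
  obtains \<delta> where "0 < \<delta>" "\<delta> < \<rho>"
    "\<And>z. z \<in> cball z0 \<delta> \<Longrightarrow> norm (G1 z - G1 z0) \<le> r/2 \<and> norm (G2 z - G2 z0) \<le> r/2"
    "(\<lambda>z. dps_complex a (G1 z - G1 z0) (G2 z - G2 z0)) holomorphic_on ball z0 \<delta>"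
proof -
  have "isCont G1 z0" "isCont G2 z0"
    using holomorphic_on_imp_continuous_on[OF G(1)] holomorphic_on_imp_continuous_on[OF G(2)] G(3)
    by (simp_all add: continuous_on_eq_continuous_at)
  then obtain d1 d2 where "d1 > 0" "\<And>z. dist z z0 < d1 \<Longrightarrow> dist (G1 z) (G1 z0) < r/2"
    and "d2 > 0" "\<And>z. dist z z0 < d2 \<Longrightarrow> dist (G2 z) (G2 z0) < r/2"
    using a(2) unfolding continuous_at_eps_delta by (metis half_gt_zero)
  moreover define \<delta> where "\<delta> = min (\<rho>/2) (min d1 d2) / 2"
  ultimately have \<delta>: "0 < \<delta>" "\<delta> < \<rho>"
    and small: "\<And>z. z \<in> cball z0 \<delta> \<Longrightarrow> norm (G1 z - G1 z0) \<le> r/2 \<and> norm (G2 z - G2 z0) \<le> r/2"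
    using G(3) by (auto simp: dist_norm norm_minus_commute less_imp_le)
  have "cball z0 \<delta> \<subseteq> ball z0 \<rho>" using \<delta> by auto
  then have "(\<lambda>z. dps_complex a (G1 z - G1 z0) (G2 z - G2 z0)) holomorphic_on ball z0 \<delta>"
    using a(2) small
    by (intro holomorphic_on_dps_complex[OF a(1), where p = "r/2" and q = "r/2"]
        holomorphic_intros continuous_intros holomorphic_on_subset[OF G(1)] holomorphic_on_subset[OF G(2)]
        continuous_on_subset[OF holomorphic_on_imp_continuous_on[OF G(1)]]
        continuous_on_subset[OF holomorphic_on_imp_continuous_on[OF G(2)]])
      (use \<delta> in \<open>auto simp: power_divide\<close>)
  with \<delta> small show ?thesis by (rule that)
qed

lemma norm_less_if_components_le_half:
  fixes h :: "real^2"
  assumes "0 < r" "\<bar>h$1\<bar> \<le> r/2" "\<bar>h$2\<bar> \<le> r/2"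
  shows "norm h < r"
proof -
  have "4 * (h$1)^2 \<le> r^2" "4 * (h$2)^2 \<le> r^2"
    using assms abs_le_square_iff[of _ "r/2"] by (auto simp: power_divide)
  moreover have "0 < r^2" using assms(1) by simp
  ultimately have "(h$1)^2 + (h$2)^2 < r^2" by linarith
  then show ?thesis using assms(1) by (simp add: norm_less_iff_sum_squares_less)
qed

lemma locally_holomorphic_extendable_compose_analytic2:
  fixes f :: "real^2 \<Rightarrow> real^'n" and \<gamma> :: "real \<Rightarrow> real^2"
  assumes f: "analytic2_on U f" and \<gamma>U: "\<gamma> ` I \<subseteq> U"
    and \<gamma>: "locally_holomorphic_extendable I (\<lambda>t. \<gamma> t $ 1)" "locally_holomorphic_extendable I (\<lambda>t. \<gamma> t $ 2)"
  shows "locally_holomorphic_extendable I (\<lambda>t. f (\<gamma> t) $ m)"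
  unfolding locally_holomorphic_extendable_def
proof
  fix t assume t: "t \<in> I"
  define z0 where "z0 = complex_of_real t"
  have "\<gamma> t \<in> U" using t \<gamma>U by blast
  then obtain r c where r: "r > 0" "ball (\<gamma> t) r \<subseteq> U" "dps_abs_conv c r"
    and fc: "\<And>h. norm h < r \<Longrightarrow> f (\<gamma> t + h) = dps_eval c h"
    by (rule analytic2_on_local_dps[OF f]) blast
  obtain \<rho> G1 G2 where \<rho>: "\<rho> > 0" "ball t \<rho> \<subseteq> I"
    and G1: "G1 holomorphic_on ball z0 \<rho>" "\<And>s. s \<in> ball t \<rho> \<Longrightarrow> G1 (of_real s) = of_real (\<gamma> s $ 1)"
    and G2: "G2 holomorphic_on ball z0 \<rho>" "\<And>s. s \<in> ball t \<rho> \<Longrightarrow> G2 (of_real s) = of_real (\<gamma> s $ 2)"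
    unfolding z0_def by (rule locally_holomorphic_extendable_pairE[OF \<gamma> t]) blast
  \<comment> \<open>near \<open>z0\<close> the extended curve stays in the square of half-width \<open>r/2\<close>, inside the disc of convergence\<close>
  define F where "F z = dps_complex (\<lambda>k. c k $ m) (G1 z - G1 z0) (G2 z - G2 z0)" for z
  obtain \<delta> where \<delta>: "0 < \<delta>" "\<delta> < \<rho>"
    and small: "\<And>z. z \<in> cball z0 \<delta> \<Longrightarrow> norm (G1 z - G1 z0) \<le> r/2 \<and> norm (G2 z - G2 z0) \<le> r/2"
    and "F holomorphic_on ball z0 \<delta>"
    unfolding F_def
    by (rule holomorphic_dps_complex_near_centreE[OF dps_abs_conv_component[OF r(3)] r(1) G1(1) G2(1) \<rho>(1)]) blast
  moreover have "F (of_real s) = of_real (f (\<gamma> s) $ m)" if s: "s \<in> ball t \<delta>" for s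
  proof -
    define h where "h = \<gamma> s - \<gamma> t"
    have "s \<in> ball t \<rho>" "t \<in> ball t \<rho>" using s \<delta> \<rho>(1) by auto
    then have G: "G1 (of_real s) - G1 z0 = of_real (h $ 1)" "G2 (of_real s) - G2 z0 = of_real (h $ 2)"
      by (simp_all add: G1(2) G2(2) z0_def h_def)
    then have "\<bar>h $ 1\<bar> \<le> r/2" "\<bar>h $ 2\<bar> \<le> r/2"
      using small[of "of_real s"] s by (simp_all add: z0_def dist_commute)
    then have "norm h < r" "dps_eval c h $ m = f (\<gamma> s) $ m"
      using norm_less_if_components_le_half[OF r(1)] fc[of h] by (auto simp: h_def)
    with G show ?thesis
      using dps_complex_of_real[OF dps_abs_conv_component[OF r(3)]] dps_eval_component[OF r(3)]
      by (simp add: F_def)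
  qed
  ultimately show "\<exists>\<rho>>0. ball t \<rho> \<subseteq> I \<and> (\<exists>G. G holomorphic_on ball (of_real t) \<rho> \<and>
      (\<forall>s\<in>ball t \<rho>. G (of_real s) = of_real (f (\<gamma> s) $ m)))"
    using \<delta> \<rho>(2) unfolding z0_def by (intro exI[of _ \<delta>] conjI exI[of _ F]) auto
qed

lemma analytic1_on_locally_holomorphic_extendable:
  fixes \<gamma> :: "real \<Rightarrow> real^2"
  assumes "analytic1_on I \<gamma>"
  shows "locally_holomorphic_extendable I (\<lambda>t. \<gamma> t $ m)"
  unfolding locally_holomorphic_extendable_def
proof
  fix t assume "t \<in> I"
  then obtain r c where r: "r > 0" "ball t r \<subseteq> I" "dps_abs_conv c r"
    and \<gamma>: "\<And>s. \<bar>s\<bar> < r \<Longrightarrow> \<gamma> (t + s) = dps_eval c (vector [s, 0])"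
    by (rule analytic1_on_local_dps[OF assms]) blast
  define G where "G z = dps_complex (\<lambda>k. c k $ m) (z - of_real t) 0" for z
  have "G holomorphic_on ball (of_real t) (r/2)"
    unfolding G_def using r(1)
    by (intro holomorphic_on_dps_complex[OF dps_abs_conv_component[OF r(3)], where p = "r/2" and q = 0])
      (auto intro!: holomorphic_intros continuous_intros simp: dist_norm norm_minus_commute power_strict_mono)
  moreover have "G (of_real s) = of_real (\<gamma> s $ m)" if "s \<in> ball t (r/2)" for s
  proof -
    have "\<bar>s - t\<bar> < r" "norm (vector [s - t, 0] :: real^2) < r"
      using that r(1) by (auto simp: vector_2_eq_scaleR_axis dist_real_def abs_minus_commute)
    then show ?thesis
      using dps_complex_of_real[OF dps_abs_conv_component[OF r(3)], of "vector [s - t, 0]"]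
        dps_eval_component[OF r(3)] \<gamma>[of "s - t"]
      by (simp add: G_def)
  qed
  ultimately show "\<exists>\<rho>>0. ball t \<rho> \<subseteq> I \<and> (\<exists>G. G holomorphic_on ball (of_real t) \<rho> \<and>
      (\<forall>s\<in>ball t \<rho>. G (of_real s) = of_real (\<gamma> s $ m)))"
    using r by (intro exI[of _ "r/2"] conjI exI[of _ G]) auto
qed

lemma locally_holomorphic_extendable_gram_det:
  fixes \<xi> :: "real^2 \<Rightarrow> real^3" and \<gamma> :: "real \<Rightarrow> real^2"
  assumes "open I" "analytic2_on U \<xi>" "analytic1_on I \<gamma>" "\<gamma> ` I \<subseteq> U"
  shows "locally_holomorphic_extendable I (\<lambda>t. gram_det (jacobian \<xi> (at (\<gamma> t))))"
proof -
  have "locally_holomorphic_extendable I (\<lambda>t. partial_deriv \<xi> j (\<gamma> t) $ k)" for j k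
    using analytic2_on_partial_deriv[OF assms(2)] assms(4)
      analytic1_on_locally_holomorphic_extendable[OF assms(3)] analytic1_on_locally_holomorphic_extendable[OF assms(3)]
    by (rule locally_holomorphic_extendable_compose_analytic2)
  then show ?thesis
    unfolding gram_det_jacobian power2_eq_square
    by (intro locally_holomorphic_extendable_diff locally_holomorphic_extendable_mult
        locally_holomorphic_extendable_sum[OF assms(1)]) auto
qed

section \<open>Identity theorem\<close>

lemma of_real_islimpt_image_ball:
  fixes s e :: real
  assumes "e > 0"
  shows "(of_real s :: complex) islimpt (of_real ` ball s e)"
  unfolding islimpt_approachable
proof (intro allI impI)
  fix \<epsilon> :: real assume "\<epsilon> > 0"
  with assms have "s + min \<epsilon> e / 2 \<in> ball s e" "s + min \<epsilon> e / 2 \<noteq> s" "dist (s + min \<epsilon> e / 2) s < \<epsilon>"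
    by (auto simp: dist_real_def)
  then show "\<exists>z\<in>(of_real ` ball s e :: complex set). z \<noteq> of_real s \<and> dist z (of_real s) < \<epsilon>"
    by (intro bexI[of _ "of_real (s + min \<epsilon> e / 2)"]) (simp_all del: of_real_add)
qed

lemma locally_holomorphic_extendable_interior_zeros_closed:
  assumes f: "locally_holomorphic_extendable I f"
    and t: "t \<in> I" "t \<in> closure (interior {t\<in>I. f t = 0})"
  shows "t \<in> interior {t\<in>I. f t = 0}"
proof -
  define Z where "Z = interior {t\<in>I. f t = 0}"
  obtain \<rho> G where \<rho>: "\<rho> > 0" "ball t \<rho> \<subseteq> I" "G holomorphic_on ball (of_real t) \<rho>"
    and G: "\<And>s. s \<in> ball t \<rho> \<Longrightarrow> G (of_real s) = of_real (f s)"
    using f t(1) unfolding locally_holomorphic_extendable_def by blast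
  obtain s where s: "s \<in> Z" "s \<in> ball t \<rho>"
    using t(2) \<rho>(1) unfolding Z_def closure_approachable by (metis dist_commute mem_ball)
  have "open (Z \<inter> ball t \<rho>)" by (simp add: Z_def open_Int)
  then obtain e where e: "e > 0" "ball s e \<subseteq> Z \<inter> ball t \<rho>"
    using s open_contains_ball by blast
  \<comment> \<open>\<open>G\<close> vanishes on a real segment, hence on the whole disc\<close>
  have "G w = 0" if "w \<in> ball (of_real t) \<rho>" for w
  proof (rule analytic_continuation[OF \<rho>(3) open_ball convex_connected[OF convex_ball] _ _
        of_real_islimpt_image_ball[OF e(1)] _ that])
    show "(of_real ` ball s e :: complex set) \<subseteq> ball (of_real t) \<rho>" using e(2) by auto
    show "(of_real s :: complex) \<in> ball (of_real t) \<rho>" using s(2) by simp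
    show "G z = 0" if z: "z \<in> of_real ` ball s e" for z
    proof -
      obtain y where y: "y \<in> ball s e" "z = of_real y" using z by blast
      then have "y \<in> ball t \<rho>" "f y = 0"
        using e(2) interior_subset[of "{t\<in>I. f t = 0}"] unfolding Z_def by auto
      then show ?thesis using G y(2) by simp
    qed
  qed
  then have "ball t \<rho> \<subseteq> {t\<in>I. f t = 0}" using \<rho>(2) G by fastforce
  then show ?thesis unfolding mem_interior using \<rho>(1) by blast
qed

lemma locally_holomorphic_extendable_identity:
  assumes "open I" "connected I" and f: "locally_holomorphic_extendable I f"
  shows "(\<forall>t\<in>I. f t = 0) \<or> interior {t\<in>I. f t = 0} = {}"
proof -
  define Z where "Z = interior {t\<in>I. f t = 0}"
  have "Z \<subseteq> I" using interior_subset by (auto simp: Z_def)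
  then have "I - Z = I \<inter> - closure Z"
    using locally_holomorphic_extendable_interior_zeros_closed[OF f] closure_subset unfolding Z_def by blast
  then have "open (I - Z)" using assms(1) by auto
  then have "Z \<inter> I = {} \<or> (I - Z) \<inter> I = {}"
    by (intro connectedD[OF assms(2)]) (auto simp: Z_def)
  then show ?thesis
    using \<open>Z \<subseteq> I\<close> interior_subset[of "{t\<in>I. f t = 0}"] unfolding Z_def by blast
qed

lemma continuous_on_eq_0_off_nowhere_dense:
  fixes f g :: "real \<Rightarrow> real"
  assumes "open I" "continuous_on I g" "interior {t\<in>I. f t = 0} = {}"
    and "\<And>t. t \<in> I \<Longrightarrow> f t \<noteq> 0 \<Longrightarrow> g t = 0" "t \<in> I"
  shows "g t = 0"
proof -
  have "open (I \<inter> g -` (- {0}))"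
    using assms(1,2) by (intro continuous_open_preimage) auto
  moreover have "I \<inter> g -` (- {0}) \<subseteq> {t\<in>I. f t = 0}" using assms(4) by auto
  ultimately have "I \<inter> g -` (- {0}) \<subseteq> interior {t\<in>I. f t = 0}"
    by (rule interior_maximal[rotated])
  then show ?thesis using assms(3,5) by auto
qed

theorem corollary4p1:
  fixes U :: "(real^2) set" and x \<xi> :: "real^2 \<Rightarrow> real^3"
    and \<Omega> :: "real^2 \<Rightarrow> real^2^3" and I :: "real set" and \<gamma> :: "real \<Rightarrow> real^2"
  assumes "open U"
    and "analytic2_on U x" and "analytic2_on U \<xi>" and "\<forall>u\<in>U. norm (\<xi> u) = 1"
    and "proper_frontal U \<xi>"
    and "normal_congruence U x \<xi>"
    and "tangent_moving_basis U \<xi> \<Omega>"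
    and "is_interval I" and "open I" and "I \<noteq> {}"
    and "analytic1_on I \<gamma>" and "\<gamma> ` I \<subseteq> U"
    and "\<forall>t\<in>I. let g' = vector_derivative \<gamma> (at t); u = \<gamma> t; D = Delta \<xi> \<Omega> u in
           g' \<bullet> ((D ** Pmat ** transpose (adj2 (second_ff x \<Omega> u)) ** D ** first_ff \<Omega> u
                   ** transpose D) *v g') = 0"
  shows "\<gamma> ` I \<subseteq> singular_set U \<xi> \<or>
         (\<forall>t\<in>I. let g' = vector_derivative \<gamma> (at t); u = \<gamma> t; D = Delta \<xi> \<Omega> u in
           g' \<bullet> ((Pmat ** adj2 (second_ff x \<Omega> u) ** first_ff \<Omega> u ** transpose D) *v g') = 0)"
proof -
  have \<gamma>U: "\<gamma> t \<in> U" if "t \<in> I" for t using assms(12) that by blast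
  define K where "K t = gram_det (jacobian \<xi> (at (\<gamma> t)))" for t
  define F where "F t = developable_form x \<xi> \<Omega> (\<gamma> t) (vector_derivative \<gamma> (at t))" for t
  have singular: "\<gamma> t \<in> singular_set U \<xi> \<longleftrightarrow> K t = 0" if "t \<in> I" for t
    unfolding K_def
    by (rule singular_set_iff_gram_det_eq_0[OF \<gamma>U[OF that] analytic2_on_differentiable[OF assms(3) \<gamma>U[OF that]]])
  have F_zero: "F t = 0" if "t \<in> I" "K t \<noteq> 0" for t
    unfolding F_def using assms(4,13) singular that
    by (intro developable_form_eq_0_off_singular_set[OF assms(1-3) _ assms(6,7) \<gamma>U])
      (auto simp: principal_form_def Let_def)
  have "(\<forall>t\<in>I. K t = 0) \<or> interior {t\<in>I. K t = 0} = {}"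
    unfolding K_def
    by (intro locally_holomorphic_extendable_identity locally_holomorphic_extendable_gram_det[OF assms(9,3,11,12)]
        is_interval_connected assms)
  moreover have "continuous_on I F"
    unfolding F_def by (rule continuous_on_developable_form_along_curve[OF assms(1,2,3,7,9,11,12)])
  ultimately have "\<gamma> ` I \<subseteq> singular_set U \<xi> \<or> (\<forall>t\<in>I. F t = 0)"
    using singular continuous_on_eq_0_off_nowhere_dense[where f = K and g = F, OF assms(9) _ _ F_zero] by blast
  then show ?thesis by (simp add: F_def developable_form_def Let_def)
qed

end
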